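(* Consider the MPS model described in the context. For each fixed $\mathbf{x}=(x_1,\dots,x_n)\in\mathbb{R}^n$, as $D_1,\dots,D_n\to\infty$ sequentially, $$\Psi(\mathbf{x})\xrightarrow{\text{Dist.}}\mathcal{N}\Big(0,\ \prod_{i=1}^n\Big(\sum_{j=1}^{d_i}\phi_i^{j}(x_i)^2\Big)\sigma_i^2\Big).$$
   Context: Fix $n\ge 1$, finite physical dimensions $d_1,\dots,d_n$, feature maps $\phi_i:\mathbb{R}\to\mathbb{R}^{d_i}$ with components $\phi_i^{s}$, and constants $\sigma_1,\dots,\sigma_n>0$. For bond dimensions $D_1,\dots,D_n$ put $D_{n+1}=D_1$. The MPS consists of random tensors $A^{(i)}_{s;a,b}$, $s\le d_i$, $a\le D_i$, $b\le D_{i+1}$, all entries independent with $A^{(i)}_{s;a,b}\sim\mathcal{N}(0,\sigma_i^2/\sqrt{D_iD_{i+1}})$. The MPS output is $\Psi(\mathbf{x})=\sum_{s_1,\dots,s_n}\sum_{a_1,\dots,a_n}A^{(1)}_{s_1;a_1a_2}\cdots A^{(n)}_{s_n;a_na_1}\prod_{i=1}^n\phi_i^{s_i}(x_i)$. "Sequentially" means iterated limits in which the bond dimensions are sent to infinity one after another. *)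

theory Defs
  imports "HOL-Probability.Probability"
begin

definition gaussian :: "real \<Rightarrow> real \<Rightarrow> real measure" where
  "gaussian m v = (if v = 0 then return borel m else density lborel (normal_density m (sqrt v)))"

text \<open>Sites are indexed 0..n-1; the bond dimension of site i is D i, the right bond of site i
  is D ((i+1) mod n) (periodic boundary, D_{n+1} = D_1).  Feature map: phi i x s = phi_i^s(x).\<close>

definition mps_index :: "nat \<Rightarrow> (nat \<Rightarrow> nat) \<Rightarrow> (nat \<Rightarrow> nat) \<Rightarrow> (nat \<times> nat \<times> nat \<times> nat) set" where
  "mps_index n d D = {(i, s, a, b). i < n \<and> s < d i \<and> a < D i \<and> b < D ((i + 1) mod n)}"

definition mps_entries :: "nat \<Rightarrow> (nat \<Rightarrow> nat) \<Rightarrow> (nat \<Rightarrow> real) \<Rightarrow> (nat \<Rightarrow> nat)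
    \<Rightarrow> ((nat \<times> nat \<times> nat \<times> nat) \<Rightarrow> real) measure" where
  "mps_entries n d \<sigma> D = PiM (mps_index n d D)
     (\<lambda>(i, s, a, b). gaussian 0 ((\<sigma> i)\<^sup>2 / sqrt (real (D i) * real (D ((i + 1) mod n)))))"

definition mps_output :: "nat \<Rightarrow> (nat \<Rightarrow> nat) \<Rightarrow> (nat \<Rightarrow> real \<Rightarrow> nat \<Rightarrow> real) \<Rightarrow> (nat \<Rightarrow> nat)
    \<Rightarrow> ((nat \<times> nat \<times> nat \<times> nat) \<Rightarrow> real) \<Rightarrow> (nat \<Rightarrow> real) \<Rightarrow> real" where
  "mps_output n d \<phi> D A x =
     (\<Sum>s\<in>PiE {..<n} (\<lambda>i. {..<d i}). \<Sum>a\<in>PiE {..<n} (\<lambda>i. {..<D i}).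
        (\<Prod>i<n. A (i, s i, a i, a ((i + 1) mod n))) * (\<Prod>i<n. \<phi> i (x i) (s i)))"

definition mps_law :: "nat \<Rightarrow> (nat \<Rightarrow> nat) \<Rightarrow> (nat \<Rightarrow> real \<Rightarrow> nat \<Rightarrow> real) \<Rightarrow> (nat \<Rightarrow> real)
    \<Rightarrow> (nat \<Rightarrow> real) \<Rightarrow> (nat \<Rightarrow> nat) \<Rightarrow> real measure" where
  "mps_law n d \<phi> \<sigma> x D = distr (mps_entries n d \<sigma> D) borel (\<lambda>A. mps_output n d \<phi> D A x)"

text \<open>Sequential (iterated) weak limit: first D 0 \<rightarrow> \<infinity>, then D 1 \<rightarrow> \<infinity>, ..., finally D (n-1) \<rightarrow> \<infinity>.
  mu k D is the limit law after D 0, ..., D (k-1) have been sent to infinity (depends on D k .. D (n-1)).\<close>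
definition seq_weak_limit :: "nat \<Rightarrow> ((nat \<Rightarrow> nat) \<Rightarrow> real measure) \<Rightarrow> real measure \<Rightarrow> bool" where
  "seq_weak_limit n L \<nu> \<longleftrightarrow>
     (\<exists>\<mu> :: nat \<Rightarrow> (nat \<Rightarrow> nat) \<Rightarrow> real measure.
        (\<forall>D. (\<forall>i<n. 1 \<le> D i) \<longrightarrow> \<mu> 0 D = L D) \<and>
        (\<forall>k<n. \<forall>D. (\<forall>i<n. 1 \<le> D i) \<longrightarrow>
            real_distribution (\<mu> (Suc k) D) \<and>
            weak_conv_m (\<lambda>m. \<mu> k (D(k := Suc m))) (\<mu> (Suc k) D)) \<and>
        (\<forall>D. (\<forall>i<n. 1 \<le> D i) \<longrightarrow> \<mu> n D = \<nu>))"

end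

theory Submission
  imports Defs
begin

text \<open>Let \<open>B i\<close> be the random \<open>D i \<times> D (i + 1)\<close> matrix with entries
  \<open>\<Sum>s. A (i, s, a, b) \<cdot> \<phi> i (x i) s\<close>, so that \<open>\<Psi>(x) = tr (B 0 \<cdot> \<dots> \<cdot> B (n - 1))\<close>.
  Conditionally on all other sites, \<open>\<Psi>(x)\<close> is a linear form in the independent centred Gaussian
  entries of the last site, hence a centred Gaussian whose variance \<open>V 0\<close> is a multiple of the
  squared Frobenius norm of \<open>B 0 \<cdot> \<dots> \<cdot> B (n - 2)\<close>. Let \<open>V k\<close> be the analogous, suitably
  normalised, quantity for \<open>B k \<cdot> \<dots> \<cdot> B (n - 2)\<close>; the \<open>k\<close>-th intermediate limit is the Gaussian
  mixture \<open>Z \<cdot> sqrt (V k)\<close> with an independent standard normal \<open>Z\<close>. Integrating out site \<open>k\<close>, the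
  difference \<open>V k - V (k + 1)\<close> is a sum of \<open>D k\<close> independent centred row contributions, so
  \<open>E |V k - V (k + 1)| = O (1 / sqrt (D k))\<close>, while the law of \<open>V (k + 1)\<close> does not involve \<open>D k\<close>.
  As \<open>v \<mapsto> exp (- t\<^sup>2 v / 2)\<close> is Lipschitz on \<open>[0, \<infinity>)\<close>, the characteristic functions converge, and
  Levy's continuity theorem gives each step of the sequential limit. Finally \<open>V (n - 1)\<close> is the
  constant \<open>\<Prod>i. \<sigma> i\<^sup>2 \<cdot> \<Sum>j. \<phi> i (x i) j\<^sup>2\<close>.\<close>

lemma gaussian_eq_distr_std_normal:
  assumes "0 \<le> v"
  shows "gaussian 0 v = distr std_normal_distribution borel (\<lambda>z. sqrt v * z)"
proof -
  interpret std: prob_space std_normal_distribution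
    by (simp add: prob_space_normal_density)
  show ?thesis
  proof (cases "v = 0")
    case True
    then show ?thesis
      by (simp add: gaussian_def std.distr_const)
  next
    case False
    have "distributed std_normal_distribution lborel (\<lambda>z. z) std_normal_density"
      by (simp add: distributed_def distr_id2)
    then have "distributed std_normal_distribution lborel (\<lambda>z. 0 + sqrt v * z)
        (normal_density (0 + sqrt v * 0) (\<bar>sqrt v\<bar> * 1))"
      using assms False by (intro std.normal_density_affine) simp_all
    then show ?thesis
      using assms False by (simp add: gaussian_def distributed_def distr_def)
  qed
qed

lemma sets_gaussian [simp, measurable_cong]: "0 \<le> v \<Longrightarrow> sets (gaussian 0 v) = sets borel"
  by (simp add: gaussian_eq_distr_std_normal)

lemma space_gaussian [simp]: "0 \<le> v \<Longrightarrow> space (gaussian 0 v) = UNIV"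
  by (simp add: gaussian_eq_distr_std_normal)

lemma prob_space_gaussian: "0 \<le> v \<Longrightarrow> prob_space (gaussian 0 v)"
  unfolding gaussian_eq_distr_std_normal
  by (intro prob_space.prob_space_distr) (auto simp: prob_space_normal_density)

lemma real_distribution_gaussian: "0 \<le> v \<Longrightarrow> real_distribution (gaussian 0 v)"
  by (simp add: real_distribution_def real_distribution_axioms_def prob_space_gaussian)

lemma integral_gaussian:
  fixes f :: "real \<Rightarrow> 'b::{banach, second_countable_topology}"
  assumes "0 \<le> v" "f \<in> borel_measurable borel"
  shows "integral\<^sup>L (gaussian 0 v) f = (\<integral>z. f (sqrt v * z) \<partial>std_normal_distribution)"
  using assms by (simp add: gaussian_eq_distr_std_normal integral_distr)

lemma integrable_gaussian_iff:
  fixes f :: "real \<Rightarrow> 'b::{banach, second_countable_topology}"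
  assumes "0 \<le> v" "f \<in> borel_measurable borel"
  shows "integrable (gaussian 0 v) f \<longleftrightarrow> integrable std_normal_distribution (\<lambda>z. f (sqrt v * z))"
  using assms by (simp add: gaussian_eq_distr_std_normal integrable_distr_eq)

lemma char_gaussian:
  assumes "0 \<le> v"
  shows "char (gaussian 0 v) t = exp (- (t\<^sup>2 * v) / 2)"
proof -
  have "char (gaussian 0 v) t = char std_normal_distribution (t * sqrt v)"
    using assms unfolding char_def by (subst integral_gaussian) (auto simp: mult_ac)
  then show ?thesis
    using assms by (simp add: char_std_normal_distribution power_mult_distrib)
qed

lemma integrable_gaussian_power: "0 \<le> v \<Longrightarrow> integrable (gaussian 0 v) (\<lambda>y. y ^ k)"
  by (subst integrable_gaussian_iff)
     (auto simp: power_mult_distrib intro!: integrable_mult_right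
         integrable_std_normal_distribution_moment)

lemma integral_gaussian_id: "0 \<le> v \<Longrightarrow> (\<integral>y. y \<partial>gaussian 0 v) = 0"
  using integral_std_normal_distribution_moment_odd[of 1]
  by (subst integral_gaussian) auto

lemma integral_gaussian_square: "0 \<le> v \<Longrightarrow> (\<integral>y. y\<^sup>2 \<partial>gaussian 0 v) = v"
  using std_normal_distribution_even_moments(1)[of 1]
  by (subst integral_gaussian) (auto simp: power_mult_distrib)

lemma integral_gaussian_power4: "0 \<le> v \<Longrightarrow> (\<integral>y. y ^ 4 \<partial>gaussian 0 v) = 3 * v\<^sup>2"
proof -
  assume v: "0 \<le> v"
  have "(sqrt v) ^ 4 = ((sqrt v)\<^sup>2)\<^sup>2"
    by (simp flip: power_mult)
  then have "(sqrt v) ^ 4 = v\<^sup>2"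
    using v by simp
  moreover have "(\<integral>z. z ^ (2 * 2) \<partial>std_normal_distribution) = 3"
    using std_normal_distribution_even_moments(1)[of 2] by (simp add: fact_numeral)
  ultimately show ?thesis
    using v by (subst integral_gaussian) (auto simp: power_mult_distrib)
qed

lemma integral_PiM_restrict:
  fixes f :: "('i \<Rightarrow> 'a) \<Rightarrow> 'b::{banach, second_countable_topology}"
  assumes M: "\<And>i. prob_space (M i)" and I: "finite I" "J \<subseteq> I"
    and f: "f \<in> borel_measurable (PiM J M)"
    and dep: "\<And>x. x \<in> space (PiM I M) \<Longrightarrow> f x = f (restrict x J)"
  shows "integral\<^sup>L (PiM I M) f = integral\<^sup>L (PiM J M) f"
proof -
  interpret product_prob_space M I
    by (simp add: product_prob_space_def product_prob_space_axioms_def product_sigma_finite_def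
        M prob_space_imp_sigma_finite)
  have "integral\<^sup>L (PiM J M) f = integral\<^sup>L (distr (PiM I M) (PiM J M) (\<lambda>x. restrict x J)) f"
    using distr_restrict[OF I(2,1)] by simp
  also have "\<dots> = (\<integral>x. f (restrict x J) \<partial>PiM I M)"
    using I by (intro integral_distr measurable_restrict_subset f)
  also have "\<dots> = integral\<^sup>L (PiM I M) f"
    by (intro Bochner_Integration.integral_cong refl) (rule dep[symmetric])
  finally show ?thesis by simp
qed

lemma measurable_PiM_restrict_dependent:
  assumes "J \<subseteq> I" and f: "f \<in> measurable (PiM J M) N"
    and dep: "\<And>x. x \<in> space (PiM I M) \<Longrightarrow> f x = f (restrict x J)"
  shows "f \<in> measurable (PiM I M) N"
proof -
  have "(\<lambda>x. f (restrict x J)) \<in> measurable (PiM I M) N"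
    using measurable_comp[OF measurable_restrict_subset[OF \<open>J \<subseteq> I\<close>] f] by (simp add: comp_def)
  then show ?thesis
    by (rule measurable_cong[THEN iffD1, rotated]) (simp add: dep)
qed

lemma indep_vars_PiM_coordinates:
  assumes M: "\<And>i. prob_space (M i)" and "J \<noteq> {}"
  shows "prob_space.indep_vars (PiM J M) M (\<lambda>i x. x i) J"
proof -
  interpret P: prob_space "PiM J M" by (intro prob_space_PiM M)
  have "distr (PiM J M) (PiM J M) (\<lambda>x. \<lambda>i\<in>J. x i) = distr (PiM J M) (PiM J M) (\<lambda>x. x)"
    by (intro distr_cong) (auto simp: space_PiM)
  moreover have "PiM J (\<lambda>i. distr (PiM J M) (M i) (\<lambda>x. x i)) = PiM J M"
    by (intro PiM_cong refl distr_PiM_component M)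
  ultimately show ?thesis
    using assms by (subst P.indep_vars_iff_distr_eq_PiM') auto
qed

lemma indep_var_PiM_blocks:
  fixes f g :: "('i \<Rightarrow> 'a) \<Rightarrow> real"
  assumes M: "\<And>i. prob_space (M i)" and "J \<noteq> {}"
    and AB: "A \<subseteq> J" "B \<subseteq> J" "A \<inter> B = {}"
    and f: "f \<in> borel_measurable (PiM A M)" and g: "g \<in> borel_measurable (PiM B M)"
  shows "prob_space.indep_var (PiM J M) borel (\<lambda>x. f (restrict x A)) borel (\<lambda>x. g (restrict x B))"
proof -
  interpret P: prob_space "PiM J M" by (intro prob_space_PiM M)
  have "P.indep_var (PiM A M) (\<lambda>x. restrict (\<lambda>i. x i) A) (PiM B M) (\<lambda>x. restrict (\<lambda>i. x i) B)"
    using AB by (intro P.indep_var_restrict[OF indep_vars_PiM_coordinates[OF M \<open>J \<noteq> {}\<close>]]) auto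
  from P.indep_var_compose[OF this f g] show ?thesis by (simp add: comp_def)
qed

lemma integral_PiM_square_sum_indep_blocks:
  fixes Y :: "'a \<Rightarrow> ('i \<Rightarrow> 'b) \<Rightarrow> real"
  assumes M: "\<And>i. prob_space (M i)" and "J \<noteq> {}"
    and S: "finite S" and B: "\<And>a. a \<in> S \<Longrightarrow> B a \<subseteq> J"
    and disj: "\<And>a b. a \<in> S \<Longrightarrow> b \<in> S \<Longrightarrow> a \<noteq> b \<Longrightarrow> B a \<inter> B b = {}"
    and Y: "\<And>a. a \<in> S \<Longrightarrow> Y a \<in> borel_measurable (PiM (B a) M)"
    and dep: "\<And>a x. a \<in> S \<Longrightarrow> Y a x = Y a (restrict x (B a))"
    and int: "\<And>a. a \<in> S \<Longrightarrow> integrable (PiM J M) (Y a)"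
    and int_sq: "\<And>a. a \<in> S \<Longrightarrow> integrable (PiM J M) (\<lambda>x. (Y a x)\<^sup>2)"
    and mean: "\<And>a. a \<in> S \<Longrightarrow> integral\<^sup>L (PiM J M) (Y a) = 0"
  shows "(\<integral>x. (\<Sum>a\<in>S. Y a x)\<^sup>2 \<partial>PiM J M) = (\<Sum>a\<in>S. \<integral>x. (Y a x)\<^sup>2 \<partial>PiM J M)"
proof -
  interpret P: prob_space "PiM J M" by (intro prob_space_PiM M)
  have indep: "P.indep_var borel (Y a) borel (Y b)" if "a \<in> S" "b \<in> S" "a \<noteq> b" for a b
  proof -
    have "P.indep_var borel (\<lambda>x. Y a (restrict x (B a))) borel (\<lambda>x. Y b (restrict x (B b)))"
      using that by (intro indep_var_PiM_blocks[OF M \<open>J \<noteq> {}\<close>] B disj Y)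
    then show ?thesis
      using that by (simp flip: dep)
  qed
  have int_cross: "integrable (PiM J M) (\<lambda>x. Y a x * Y b x)" if "a \<in> S" "b \<in> S" for a b
    using that int_sq P.indep_var_integrable[OF indep int int]
    by (cases "a = b") (simp_all add: power2_eq_square)
  have cross: "(\<integral>x. Y a x * Y b x \<partial>PiM J M) = (if a = b then \<integral>x. (Y a x)\<^sup>2 \<partial>PiM J M else 0)"
    if "a \<in> S" "b \<in> S" for a b
    using that P.indep_var_lebesgue_integral[OF indep int int]
    by (cases "a = b") (simp_all add: power2_eq_square mean)
  have "(\<integral>x. (\<Sum>a\<in>S. Y a x)\<^sup>2 \<partial>PiM J M) = (\<Sum>a\<in>S. \<Sum>b\<in>S. \<integral>x. Y a x * Y b x \<partial>PiM J M)"
    by (simp add: power2_eq_square sum_product int_cross Bochner_Integration.integrable_sum)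
  also have "\<dots> = (\<Sum>a\<in>S. \<integral>x. (Y a x)\<^sup>2 \<partial>PiM J M)"
    using S by (simp add: cross sum.delta cong: sum.cong)
  finally show ?thesis .
qed

lemma measurable_PiM_gaussian_coordinate:
  assumes "\<And>i. 0 \<le> w i"
  shows "(\<lambda>x. x j) \<in> borel_measurable (PiM J (\<lambda>i. gaussian 0 (w i)))"
proof (cases "j \<in> J")
  case True
  then have "(\<lambda>x. x j) \<in> measurable (PiM J (\<lambda>i. gaussian 0 (w i))) (gaussian 0 (w j))"
    by (intro measurable_component_singleton)
  then show ?thesis
    using assms by (simp cong: measurable_cong_sets)
next
  case False
  have "(\<lambda>x. undefined) \<in> borel_measurable (PiM J (\<lambda>i. gaussian 0 (w i)))"
    by simp
  then show ?thesis
    by (rule measurable_cong[THEN iffD1, rotated]) (use False in \<open>auto simp: space_PiM\<close>)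
qed

context
  fixes w :: "'i \<Rightarrow> real"
  assumes w_nonneg: "\<And>i. 0 \<le> w i"
begin

lemma prob_space_gaussian_family: "prob_space (gaussian 0 (w i))"
  by (simp add: prob_space_gaussian w_nonneg)

lemma product_prob_space_gaussian_family: "product_prob_space (\<lambda>i. gaussian 0 (w i))"
  by (simp add: product_prob_space_def product_prob_space_axioms_def product_sigma_finite_def
      prob_space_gaussian_family prob_space_imp_sigma_finite)

lemma integral_PiM_gaussian_component:
  fixes g :: "real \<Rightarrow> real"
  assumes j: "j \<in> J" and g: "g \<in> borel_measurable borel"
  shows "(\<integral>x. g (x j) \<partial>PiM J (\<lambda>i. gaussian 0 (w i))) = integral\<^sup>L (gaussian 0 (w j)) g"
    and "integrable (PiM J (\<lambda>i. gaussian 0 (w i))) (\<lambda>x. g (x j)) \<longleftrightarrow> integrable (gaussian 0 (w j)) g"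
proof -
  have distr: "distr (PiM J (\<lambda>i. gaussian 0 (w i))) (gaussian 0 (w j)) (\<lambda>x. x j) = gaussian 0 (w j)"
    using j by (intro distr_PiM_component prob_space_gaussian_family)
  have coord: "(\<lambda>x. x j) \<in> measurable (PiM J (\<lambda>i. gaussian 0 (w i))) (gaussian 0 (w j))"
    using j by (intro measurable_component_singleton)
  have "g \<in> borel_measurable (gaussian 0 (w j))"
    using g w_nonneg by (simp cong: measurable_cong_sets)
  from integral_distr[OF coord this] integrable_distr_eq[OF coord this]
  show "(\<integral>x. g (x j) \<partial>PiM J (\<lambda>i. gaussian 0 (w i))) = integral\<^sup>L (gaussian 0 (w j)) g"
    and "integrable (PiM J (\<lambda>i. gaussian 0 (w i))) (\<lambda>x. g (x j)) \<longleftrightarrow> integrable (gaussian 0 (w j)) g"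
    by (simp_all add: distr)
qed

lemma integrable_PiM_gaussian_power:
  "j \<in> J \<Longrightarrow> integrable (PiM J (\<lambda>i. gaussian 0 (w i))) (\<lambda>x. (x j) ^ k)"
  using integral_PiM_gaussian_component(2)[of j J "\<lambda>y. y ^ k"]
  by (simp add: integrable_gaussian_power w_nonneg)

lemma integral_PiM_gaussian_power4:
  "j \<in> J \<Longrightarrow> (\<integral>x. (x j) ^ 4 \<partial>PiM J (\<lambda>i. gaussian 0 (w i))) = 3 * (w j)\<^sup>2"
  using integral_PiM_gaussian_component(1)[of j J "\<lambda>y. y ^ 4"]
  by (simp add: integral_gaussian_power4 w_nonneg)

lemma integral_PiM_gaussian_mult:
  assumes J: "finite J" and p: "p \<in> J" and q: "q \<in> J"
  shows "integrable (PiM J (\<lambda>i. gaussian 0 (w i))) (\<lambda>x. x p * x q)"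
    and "(\<integral>x. x p * x q \<partial>PiM J (\<lambda>i. gaussian 0 (w i))) = (if p = q then w p else 0)"
proof -
  interpret product_prob_space "\<lambda>i. gaussian 0 (w i)" J
    by (rule product_prob_space_gaussian_family)
  define f where "f l y = (if l = p \<or> l = q then y else (1::real))" for l y
  have f: "integrable (gaussian 0 (w l)) (f l)" for l
  proof (cases "l = p \<or> l = q")
    case True
    then have "f l = (\<lambda>y. y)"
      by (auto simp: f_def)
    then show ?thesis
      using integrable_gaussian_power[of "w l" 1] w_nonneg by simp
  next
    case False
    interpret prob_space "gaussian 0 (w l)"
      by (rule prob_space_gaussian_family)
    have "f l = (\<lambda>y. 1)"
      using False by (auto simp: f_def)
    then show ?thesis
      by simp
  qed
  have prod_f: "(\<Prod>l\<in>J. f l (x l)) = x p * x q" if "p \<noteq> q" for x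
  proof -
    have "(\<Prod>l\<in>J. f l (x l)) = (\<Prod>l\<in>{p, q}. f l (x l)) * (\<Prod>l\<in>J - {p, q}. f l (x l))"
      using p q J by (subst prod.subset_diff[of "{p,q}" J]) auto
    then show ?thesis
      using that by (simp add: f_def prod.neutral)
  qed
  have "integrable (PiM J (\<lambda>i. gaussian 0 (w i))) (\<lambda>x. x p * x q) \<and>
      (\<integral>x. x p * x q \<partial>PiM J (\<lambda>i. gaussian 0 (w i))) = (if p = q then w p else 0)"
  proof (cases "p = q")
    case True
    then show ?thesis
      using integrable_PiM_gaussian_power[OF p, of 2]
        integral_PiM_gaussian_component(1)[OF p, of power2]
        integral_gaussian_square[OF w_nonneg]
      by (simp add: power2_eq_square)
  next
    case False
    have "f p = (\<lambda>y. y)"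
      by (simp add: f_def fun_eq_iff)
    then have "integral\<^sup>L (gaussian 0 (w p)) (f p) = 0"
      by (simp add: integral_gaussian_id w_nonneg)
    then have "(\<Prod>l\<in>J. integral\<^sup>L (gaussian 0 (w l)) (f l)) = 0"
      using p J by (intro prod_zero bexI[of _ p]) auto
    then show ?thesis
      using False product_integrable_prod[OF J f] product_integral_prod[OF J f]
      by (simp add: prod_f)
  qed
  then show "integrable (PiM J (\<lambda>i. gaussian 0 (w i))) (\<lambda>x. x p * x q)"
    and "(\<integral>x. x p * x q \<partial>PiM J (\<lambda>i. gaussian 0 (w i))) = (if p = q then w p else 0)"
    by auto
qed

lemma integral_PiM_gaussian_linear_square:
  assumes J: "finite J" and P: "P \<subseteq> J"
  shows "integrable (PiM J (\<lambda>i. gaussian 0 (w i))) (\<lambda>x. (\<Sum>p\<in>P. r p * x p)\<^sup>2)"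
    and "(\<integral>x. (\<Sum>p\<in>P. r p * x p)\<^sup>2 \<partial>PiM J (\<lambda>i. gaussian 0 (w i))) = (\<Sum>p\<in>P. w p * (r p)\<^sup>2)"
proof -
  have P_fin: "finite P"
    using P J finite_subset by auto
  have square: "(\<Sum>p\<in>P. r p * x p)\<^sup>2 = (\<Sum>p\<in>P. \<Sum>q\<in>P. (r p * r q) * (x p * x q))" for x :: "'i \<Rightarrow> real"
    by (simp add: power2_eq_square sum_product mult_ac)
  have int: "integrable (PiM J (\<lambda>i. gaussian 0 (w i))) (\<lambda>x. r p * r q * (x p * x q))"
    if "p \<in> P" "q \<in> P" for p q
    using that P integral_PiM_gaussian_mult(1)[OF J] by (intro integrable_mult_right) auto
  show "integrable (PiM J (\<lambda>i. gaussian 0 (w i))) (\<lambda>x. (\<Sum>p\<in>P. r p * x p)\<^sup>2)"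
    unfolding square by (intro Bochner_Integration.integrable_sum int)
  have "(\<integral>x. (\<Sum>p\<in>P. r p * x p)\<^sup>2 \<partial>PiM J (\<lambda>i. gaussian 0 (w i)))
      = (\<Sum>p\<in>P. \<Sum>q\<in>P. \<integral>x. r p * r q * (x p * x q) \<partial>PiM J (\<lambda>i. gaussian 0 (w i)))"
    unfolding square
    by (subst Bochner_Integration.integral_sum)
       (auto intro!: sum.cong Bochner_Integration.integrable_sum int
           Bochner_Integration.integral_sum
         simp del: integral_mult_right integral_mult_right_zero)
  also have "\<dots> = (\<Sum>p\<in>P. \<Sum>q\<in>P. r p * r q * (if p = q then w p else 0))"
    using P by (intro sum.cong refl) (auto simp: integral_PiM_gaussian_mult(2)[OF J] subsetD)
  also have "\<dots> = (\<Sum>p\<in>P. w p * (r p)\<^sup>2)"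
    using P_fin by (simp add: if_distrib[where f="\<lambda>z. _ * z"] power2_eq_square mult_ac
        cong: if_cong)
  finally show "(\<integral>x. (\<Sum>p\<in>P. r p * x p)\<^sup>2 \<partial>PiM J (\<lambda>i. gaussian 0 (w i))) = (\<Sum>p\<in>P. w p * (r p)\<^sup>2)" .
qed

lemma integral_PiM_iexp_gaussian_linear:
  assumes J: "finite J"
  shows "(\<integral>y. iexp (t * (\<Sum>j\<in>J. c j * y j)) \<partial>PiM J (\<lambda>i. gaussian 0 (w i)))
    = complex_of_real (exp (- (t\<^sup>2 * (\<Sum>j\<in>J. w j * (c j)\<^sup>2)) / 2))"
proof -
  interpret product_prob_space "\<lambda>i. gaussian 0 (w i)" J
    by (rule product_prob_space_gaussian_family)
  have char_int: "integrable (gaussian 0 (w j)) (\<lambda>y. iexp (t * c j * y))" for j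
    by (intro finite_measure.integrable_const_bound[where B=1] AE_I2 prob_space.finite_measure
        prob_space_gaussian_family) (auto simp: norm_exp_i_times w_nonneg)
  have "iexp (t * (\<Sum>j\<in>J. c j * y j)) = (\<Prod>j\<in>J. iexp (t * c j * y j))" for y :: "'i \<Rightarrow> real"
    using J by (simp add: exp_sum sum_distrib_left mult_ac flip: exp_sum)
  then have "(\<integral>y. iexp (t * (\<Sum>j\<in>J. c j * y j)) \<partial>PiM J (\<lambda>i. gaussian 0 (w i)))
      = (\<Prod>j\<in>J. char (gaussian 0 (w j)) (t * c j))"
    using product_integral_prod[OF J char_int] by (simp add: char_def)
  also have "\<dots> = (\<Prod>j\<in>J. complex_of_real (exp (- ((t * c j)\<^sup>2 * w j) / 2)))"
    by (simp add: char_gaussian w_nonneg)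
  also have "\<dots> = complex_of_real (exp (\<Sum>j\<in>J. - ((t * c j)\<^sup>2 * w j) / 2))"
    using J by (simp add: exp_sum)
  also have "\<dots> = complex_of_real (exp (- (t\<^sup>2 * (\<Sum>j\<in>J. w j * (c j)\<^sup>2)) / 2))"
    by (simp add: sum_divide_distrib[symmetric] sum_negf sum_distrib_left power_mult_distrib
        mult_ac)
  finally show ?thesis .
qed

lemma integral_PiM_iexp_conditionally_gaussian:
  fixes cf :: "'i \<Rightarrow> ('i \<Rightarrow> real) \<Rightarrow> real"
  assumes I: "finite I" "J \<subseteq> I"
    and cf: "\<And>j. j \<in> J \<Longrightarrow> cf j \<in> borel_measurable (PiM (I - J) (\<lambda>i. gaussian 0 (w i)))"
    and dep: "\<And>j x. j \<in> J \<Longrightarrow> cf j x = cf j (restrict x (I - J))"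
  shows "(\<integral>x. iexp (t * (\<Sum>j\<in>J. x j * cf j x)) \<partial>PiM I (\<lambda>i. gaussian 0 (w i)))
    = (\<integral>x. complex_of_real (exp (- (t\<^sup>2 * (\<Sum>j\<in>J. w j * (cf j x)\<^sup>2)) / 2))
        \<partial>PiM I (\<lambda>i. gaussian 0 (w i)))"
    (is "integral\<^sup>L _ ?f = integral\<^sup>L _ ?g")
proof -
  interpret product_prob_space "\<lambda>i. gaussian 0 (w i)" I
    by (rule product_prob_space_gaussian_family)
  interpret J: prob_space "PiM J (\<lambda>i. gaussian 0 (w i))"
    by (intro prob_space_PiM prob_space_gaussian_family)
  have J: "finite J" "finite (I - J)" and split: "(I - J) \<union> J = I"
    using I finite_subset by auto
  have cf_I [measurable]: "cf j \<in> borel_measurable (PiM I (\<lambda>i. gaussian 0 (w i)))" if "j \<in> J" for j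
    using measurable_PiM_restrict_dependent[OF _ cf dep] that by auto
  have [measurable]: "(\<lambda>x. x j) \<in> borel_measurable (PiM I (\<lambda>i. gaussian 0 (w i)))" for j
    by (intro measurable_PiM_gaussian_coordinate w_nonneg)
  have "integrable (PiM I (\<lambda>i. gaussian 0 (w i))) ?f" "integrable (PiM I (\<lambda>i. gaussian 0 (w i))) ?g"
    using J by (auto intro!: P.integrable_const_bound[where B=1] AE_I2 sum_nonneg mult_nonneg_nonneg
        simp: norm_exp_i_times w_nonneg)
  then have fold: "integral\<^sup>L (PiM I (\<lambda>i. gaussian 0 (w i))) h
      = (\<integral>x. (\<integral>y. h (merge (I - J) J (x, y)) \<partial>PiM J (\<lambda>i. gaussian 0 (w i)))
          \<partial>PiM (I - J) (\<lambda>i. gaussian 0 (w i)))" if "h = ?f \<or> h = ?g" for h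
    using that product_integral_fold[of "I - J" J h] J split by auto
  have cf_merge: "cf j (merge (I - J) J (x, y)) = cf j x"
    if "j \<in> J" "x \<in> space (PiM (I - J) (\<lambda>i. gaussian 0 (w i)))" for j x y
    using dep[OF that(1), of "merge (I - J) J (x, y)"] that(2) by (simp add: space_PiM)
  have inner: "(\<integral>y. ?f (merge (I - J) J (x, y)) \<partial>PiM J (\<lambda>i. gaussian 0 (w i)))
      = (\<integral>y. ?g (merge (I - J) J (x, y)) \<partial>PiM J (\<lambda>i. gaussian 0 (w i)))"
    if x: "x \<in> space (PiM (I - J) (\<lambda>i. gaussian 0 (w i)))" for x
  proof -
    have "(\<integral>y. ?f (merge (I - J) J (x, y)) \<partial>PiM J (\<lambda>i. gaussian 0 (w i)))
        = (\<integral>y. iexp (t * (\<Sum>j\<in>J. cf j x * y j)) \<partial>PiM J (\<lambda>i. gaussian 0 (w i)))"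
      using x by (intro Bochner_Integration.integral_cong refl
          arg_cong[where f="\<lambda>s. iexp (t * s)"] sum.cong)
         (auto simp: cf_merge mult.commute)
    also have "\<dots> = complex_of_real (exp (- (t\<^sup>2 * (\<Sum>j\<in>J. w j * (cf j x)\<^sup>2)) / 2))"
      by (rule integral_PiM_iexp_gaussian_linear[OF J(1)])
    also have "\<dots> = (\<integral>y. ?g (merge (I - J) J (x, y)) \<partial>PiM J (\<lambda>i. gaussian 0 (w i)))"
      using x by (simp add: cf_merge J.prob_space del: integral_of_real)
    finally show ?thesis .
  qed
  show ?thesis
    unfolding fold[OF disjI1[OF refl]] fold[OF disjI2[OF refl]]
    by (intro Bochner_Integration.integral_cong refl inner)
qed

end

section \<open>Products of matrices along a chain\<close>

text \<open>\<^term>\<open>chain_prod M e k m u v\<close> is the \<open>(u, v)\<close> entry of the matrix product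
  \<open>M k \<cdot> M (k + 1) \<cdot> \<dots> \<cdot> M (k + m - 1)\<close>, where \<open>M i\<close> has \<open>e i\<close> rows and \<open>e (i + 1)\<close> columns.\<close>

fun chain_prod :: "(nat \<Rightarrow> nat \<Rightarrow> nat \<Rightarrow> real) \<Rightarrow> (nat \<Rightarrow> nat) \<Rightarrow> nat \<Rightarrow> nat \<Rightarrow> nat \<Rightarrow> nat \<Rightarrow> real" where
  "chain_prod M e k 0 u v = (if u = v then 1 else 0)"
| "chain_prod M e k (Suc m) u v = (\<Sum>c<e (k + m). chain_prod M e k m u c * M (k + m) c v)"

lemma chain_prod_Suc_left:
  assumes "u < e k" "v < e (Suc k + m)"
  shows "chain_prod M e k (Suc m) u v = (\<Sum>c<e (Suc k). M k u c * chain_prod M e (Suc k) m c v)"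
  using assms(2)
proof (induction m arbitrary: v)
  case 0
  have "chain_prod M e k (Suc 0) u v = (\<Sum>c<e k. if c = u then M k c v else 0)"
    by (auto intro!: sum.cong simp del: sum.delta sum.delta')
  also have "\<dots> = M k u v" using assms(1) by (simp add: sum.delta)
  also have "\<dots> = (\<Sum>c<e (Suc k). if c = v then M k u c else 0)"
    using 0 by (simp add: sum.delta)
  also have "\<dots> = (\<Sum>c<e (Suc k). M k u c * chain_prod M e (Suc k) 0 c v)"
    by (auto intro!: sum.cong simp del: sum.delta sum.delta')
  finally show ?case .
next
  case (Suc m)
  have "chain_prod M e k (Suc (Suc m)) u v
    = (\<Sum>c<e (k + Suc m). chain_prod M e k (Suc m) u c * M (k + Suc m) c v)"
    by simp
  also have "\<dots> = (\<Sum>c<e (k + Suc m).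
      (\<Sum>c'<e (Suc k). M k u c' * chain_prod M e (Suc k) m c' c) * M (k + Suc m) c v)"
    by (intro sum.cong refl, subst Suc.IH) auto
  also have "\<dots> = (\<Sum>c'<e (Suc k). M k u c' *
      (\<Sum>c<e (Suc k + m). chain_prod M e (Suc k) m c' c * M (Suc k + m) c v))"
    by (simp add: sum_distrib_left sum_distrib_right mult_ac sum.swap[of _ "{..<e (Suc k)}"])
  also have "\<dots> = (\<Sum>c'<e (Suc k). M k u c' * chain_prod M e (Suc k) (Suc m) c' v)"
    by simp
  finally show ?case .
qed

lemma chain_prod_cong:
  assumes "\<And>i a b. k \<le> i \<Longrightarrow> i < k + m \<Longrightarrow> a < e i \<Longrightarrow> b < e (Suc i) \<Longrightarrow> M i a b = M' i a b"
    and "v < e (k + m)"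
  shows "chain_prod M e k m u v = chain_prod M' e k m u v"
  using assms
proof (induction m arbitrary: v)
  case 0
  then show ?case by simp
next
  case (Suc m)
  have "chain_prod M e k m u c = chain_prod M' e k m u c" if "c < e (k + m)" for c
    using Suc.prems that by (intro Suc.IH) auto
  moreover have "M (k + m) c v = M' (k + m) c v" if "c < e (k + m)" for c
    using Suc.prems that by (intro Suc.prems(1)) auto
  ultimately show ?case by (auto intro!: sum.cong)
qed

lemma chain_prod_cong_dims:
  assumes "\<And>i. k \<le> i \<Longrightarrow> i < k + m \<Longrightarrow> e i = e' i"
  shows "chain_prod M e k m u v = chain_prod M e' k m u v"
  using assms
proof (induction m arbitrary: v)
  case 0
  then show ?case by simp
next
  case (Suc m)
  have "e (k + m) = e' (k + m)" using Suc.prems by auto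
  moreover have "chain_prod M e k m u c = chain_prod M e' k m u c" for c
    using Suc.prems by (intro Suc.IH) auto
  ultimately show ?case by simp
qed

lemma sum_PiE_insert:
  fixes G :: "('a \<Rightarrow> 'b) \<Rightarrow> 'c::comm_monoid_add"
  assumes "x \<notin> A"
  shows "(\<Sum>g\<in>PiE (insert x A) B. G g) = (\<Sum>y\<in>B x. \<Sum>g\<in>PiE A B. G (g(x := y)))"
proof -
  have "(\<Sum>g\<in>PiE (insert x A) B. G g) = (\<Sum>(y, g)\<in>B x \<times> PiE A B. G (g(x := y)))"
    using assms
    by (intro sum.reindex_bij_witness[of _ "\<lambda>(y,g). g(x := y)" "\<lambda>g. (g x, g(x := undefined))"])
       (auto simp: PiE_def extensional_def)
  also have "\<dots> = (\<Sum>y\<in>B x. \<Sum>g\<in>PiE A B. G (g(x := y)))"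
    by (subst sum.cartesian_product) auto
  finally show ?thesis .
qed

lemma sum_PiE_path_eq_chain_prod:
  "(\<Sum>a\<in>PiE {..<Suc m} (\<lambda>i. {..<e i}). f (a 0) (a m) * (\<Prod>i<m. M i (a i) (a (Suc i))))
     = (\<Sum>u<e 0. \<Sum>v<e m. f u v * chain_prod M e 0 m u v)"
proof (induction m arbitrary: f)
  case 0
  have "(\<Sum>a\<in>PiE {..<Suc 0} (\<lambda>i. {..<e i}). f (a 0) (a 0)) = (\<Sum>u<e 0. f u u)"
    by (intro sum.reindex_bij_witness[of _ "\<lambda>u. (\<lambda>i\<in>{..<Suc 0}. u)" "\<lambda>a. a 0"])
       (auto simp: PiE_def extensional_def fun_eq_iff)
  also have "\<dots> = (\<Sum>u<e 0. \<Sum>v<e 0. f u v * chain_prod M e 0 0 u v)"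
    by (intro sum.cong refl) (simp add: if_distrib[where f="\<lambda>z. _ * z"] sum.delta cong: if_cong)
  finally show ?case by simp
next
  case (Suc m)
  define F where "F u v = (\<Sum>c<e (Suc m). f u c * M m v c)" for u v
  have "(\<Sum>a\<in>PiE {..<Suc (Suc m)} (\<lambda>i. {..<e i}). f (a 0) (a (Suc m)) *
      (\<Prod>i<Suc m. M i (a i) (a (Suc i))))
      = (\<Sum>c<e (Suc m). \<Sum>g\<in>PiE {..<Suc m} (\<lambda>i. {..<e i}).
            f (g 0) c * ((\<Prod>i<m. M i (g i) (g (Suc i))) * M m (g m) c))"
  proof -
    have ins: "{..<Suc (Suc m)} = insert (Suc m) {..<Suc m}" by auto
    have pr: "(\<Prod>i<Suc m. M i ((g(Suc m := c)) i) ((g(Suc m := c)) (Suc i)))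
        = (\<Prod>i<m. M i (g i) (g (Suc i))) * M m (g m) c" for g :: "nat \<Rightarrow> nat" and c
    proof -
      have "(\<Prod>i<m. M i ((g(Suc m := c)) i) ((g(Suc m := c)) (Suc i)))
        = (\<Prod>i<m. M i (g i) (g (Suc i)))"
        by (intro prod.cong refl) auto
      then show ?thesis by simp
    qed
    show ?thesis
      unfolding ins by (subst sum_PiE_insert) (auto simp: pr)
  qed
  also have "\<dots> = (\<Sum>g\<in>PiE {..<Suc m} (\<lambda>i. {..<e i}). F (g 0) (g m) * (\<Prod>i<m. M i (g i) (g (Suc i))))"
    unfolding F_def by (subst sum.swap) (simp add: sum_distrib_right sum_distrib_left mult_ac)
  also have "\<dots> = (\<Sum>u<e 0. \<Sum>v<e m. F u v * chain_prod M e 0 m u v)"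
    by (rule Suc.IH)
  also have "\<dots> = (\<Sum>u<e 0. \<Sum>c<e (Suc m). f u c * chain_prod M e 0 (Suc m) u c)"
  proof (rule sum.cong[OF refl])
    fix u
    have "(\<Sum>v<e m. F u v * chain_prod M e 0 m u v)
      = (\<Sum>v<e m. \<Sum>c<e (Suc m). f u c * (chain_prod M e 0 m u v * M m v c))"
      unfolding F_def by (simp add: sum_distrib_right sum_distrib_left mult_ac)
    also have "\<dots> = (\<Sum>c<e (Suc m). \<Sum>v<e m. f u c * (chain_prod M e 0 m u v * M m v c))"
      by (rule sum.swap)
    also have "\<dots> = (\<Sum>c<e (Suc m). f u c * chain_prod M e 0 (Suc m) u c)"
      by (simp add: sum_distrib_left)
    finally show "(\<Sum>v<e m. F u v * chain_prod M e 0 m u v)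
      = (\<Sum>c<e (Suc m). f u c * chain_prod M e 0 (Suc m) u c)" .
  qed
  finally show ?case .
qed

lemma (in prob_space) nn_integral_abs_le_sqrt_integral_square:
  fixes Z :: "'a \<Rightarrow> real"
  assumes Z: "integrable M Z" and Z2: "integrable M (\<lambda>x. (Z x)\<^sup>2)"
  shows "(\<integral>\<^sup>+x. ennreal \<bar>Z x\<bar> \<partial>M) \<le> ennreal (sqrt (\<integral>x. (Z x)\<^sup>2 \<partial>M))"
proof -
  have "(\<integral>x. \<bar>Z x\<bar> \<partial>M)\<^sup>2 \<le> (\<integral>x. \<bar>Z x\<bar>\<^sup>2 \<partial>M)"
    using Z Z2 by (intro jensens_inequality[where I=UNIV] convex_power2) auto
  then have "(\<integral>x. \<bar>Z x\<bar> \<partial>M) \<le> sqrt (\<integral>x. (Z x)\<^sup>2 \<partial>M)"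
    by (simp add: real_le_rsqrt)
  moreover have "(\<integral>\<^sup>+x. ennreal \<bar>Z x\<bar> \<partial>M) = ennreal (\<integral>x. \<bar>Z x\<bar> \<partial>M)"
    using Z by (intro nn_integral_eq_integral) auto
  ultimately show ?thesis
    by (simp add: ennreal_leI)
qed

lemma (in prob_space) integral_centered_square_le:
  fixes X :: "'a \<Rightarrow> real"
  assumes "integrable M X" "integrable M (\<lambda>x. (X x)\<^sup>2)"
  shows "(\<integral>x. (X x - expectation X)\<^sup>2 \<partial>M) \<le> (\<integral>x. (X x)\<^sup>2 \<partial>M)"
  using variance_eq[OF assms] by simp

lemma real_sqrt_mult_square_divide:
  fixes x y :: real
  assumes "0 < x" "0 \<le> y"
  shows "sqrt (x * (y / x)\<^sup>2) = y / sqrt x"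
proof -
  have "sqrt (x * (y / x)\<^sup>2) = sqrt x * (y / (sqrt x * sqrt x))"
    using assms by (simp add: real_sqrt_mult)
  also have "\<dots> = y / sqrt x"
    using assms by (simp add: field_simps)
  finally show ?thesis .
qed

lemma abs_exp_neg_diff_le:
  fixes u v :: real
  assumes "0 \<le> u" "0 \<le> v"
  shows "\<bar>exp (- u) - exp (- v)\<bar> \<le> \<bar>u - v\<bar>"
proof -
  have le: "exp (- a) - exp (- b) \<le> b - a" if "0 \<le> a" "a \<le> b" for a b :: real
  proof -
    have "exp (- a) - exp (- b) = exp (- a) * (1 - exp (- (b - a)))"
      by (simp add: algebra_simps flip: exp_add)
    also have "\<dots> \<le> 1 * (b - a)"
    proof (rule mult_mono)
      show "1 - exp (- (b - a)) \<le> b - a"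
        using exp_ge_add_one_self[of "a - b"] unfolding minus_diff_eq by linarith
    qed (use that in auto)
    finally show ?thesis
      by simp
  qed
  show ?thesis
    using le[of u v] le[of v u] assms by (cases "u \<le> v") (auto simp: abs_if)
qed

section \<open>The MPS output as a Gaussian mixture\<close>

locale mps_model =
  fixes n :: nat and d :: "nat \<Rightarrow> nat" and \<phi> :: "nat \<Rightarrow> real \<Rightarrow> nat \<Rightarrow> real"
    and \<sigma> :: "nat \<Rightarrow> real" and x :: "nat \<Rightarrow> real"
  assumes n_pos: "1 \<le> n" and d_pos: "\<forall>i<n. 1 \<le> d i"
begin

definition feature :: "nat \<Rightarrow> nat \<Rightarrow> real" where
  "feature i s = \<phi> i (x i) s"

definition feature_sq :: "nat \<Rightarrow> real" where
  "feature_sq i = (\<Sum>s<d i. (feature i s)\<^sup>2)"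

definition weight_prod :: "nat \<Rightarrow> real" where
  "weight_prod k = (\<sigma> (n - 1))\<^sup>2 * feature_sq (n - 1) * (\<Prod>i<k. (\<sigma> i)\<^sup>2 * feature_sq i)"

definition site_var :: "(nat \<Rightarrow> nat) \<Rightarrow> nat \<Rightarrow> real" where
  "site_var D i = (\<sigma> i)\<^sup>2 / sqrt (real (D i) * real (D ((i + 1) mod n)))"

abbreviation idx :: "(nat \<Rightarrow> nat) \<Rightarrow> (nat \<times> nat \<times> nat \<times> nat) set" where
  "idx D \<equiv> mps_index n d D"

abbreviation entries :: "(nat \<Rightarrow> nat) \<Rightarrow> (nat \<times> nat \<times> nat \<times> nat \<Rightarrow> real) measure" where
  "entries D \<equiv> PiM (idx D) (\<lambda>p. gaussian 0 (site_var D (fst p)))"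

definition site_matrix :: "(nat \<times> nat \<times> nat \<times> nat \<Rightarrow> real) \<Rightarrow> nat \<Rightarrow> nat \<Rightarrow> nat \<Rightarrow> real" where
  "site_matrix A i a b = (\<Sum>s<d i. A (i, s, a, b) * feature i s)"

text \<open>\<^term>\<open>tail_prod D A k\<close> is the \<open>D k \<times> D (n - 1)\<close> matrix \<open>B k \<cdot> \<dots> \<cdot> B (n - 2)\<close>; for
  \<open>k = n - 1\<close> it is the empty product, the identity.\<close>

definition tail_prod :: "(nat \<Rightarrow> nat) \<Rightarrow> (nat \<times> nat \<times> nat \<times> nat \<Rightarrow> real) \<Rightarrow> nat \<Rightarrow> nat \<Rightarrow> nat \<Rightarrow> real"
  where
  "tail_prod D A k = chain_prod (site_matrix A) D k (n - 1 - k)"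

definition frob_sq :: "(nat \<Rightarrow> nat) \<Rightarrow> nat \<Rightarrow> (nat \<Rightarrow> nat \<Rightarrow> real) \<Rightarrow> real" where
  "frob_sq D k R = (\<Sum>u<D k. \<Sum>v<D (n - 1). (R u v)\<^sup>2)"

definition tail_norm_sq :: "(nat \<Rightarrow> nat) \<Rightarrow> (nat \<times> nat \<times> nat \<times> nat \<Rightarrow> real) \<Rightarrow> nat \<Rightarrow> real" where
  "tail_norm_sq D A k = frob_sq D k (tail_prod D A k)"

definition var_scale :: "(nat \<Rightarrow> nat) \<Rightarrow> nat \<Rightarrow> real" where
  "var_scale D k = weight_prod k / sqrt (real (D k) * real (D (n - 1)))"

text \<open>\<^term>\<open>cond_var D k\<close> is the random variance \<open>V k\<close> of the \<open>k\<close>-th intermediate limit, in which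
  \<open>D 0, \<dots>, D (k - 1)\<close> have been sent to infinity.\<close>

definition cond_var :: "(nat \<Rightarrow> nat) \<Rightarrow> nat \<Rightarrow> (nat \<times> nat \<times> nat \<times> nat \<Rightarrow> real) \<Rightarrow> real" where
  "cond_var D k A = var_scale D k * tail_norm_sq D A k"

lemma mps_entries_eq: "mps_entries n d \<sigma> D = entries D"
  unfolding mps_entries_def site_var_def by (simp add: case_prod_unfold)

lemma site_var_nonneg: "0 \<le> site_var D i"
  by (simp add: site_var_def)

lemma prob_space_site_law: "prob_space (gaussian 0 (site_var D i))"
  by (simp add: prob_space_gaussian site_var_nonneg)

lemma prob_space_entries: "prob_space (entries D)"
  by (intro prob_space_PiM prob_space_site_law)

lemma finite_idx: "finite (idx D)"
proof (rule finite_subset)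
  show "idx D \<subseteq> {..<n} \<times> (\<Union>i<n. {..<d i}) \<times> (\<Union>i<n. {..<D i}) \<times> (\<Union>i<n. {..<D i})"
    using n_pos by (fastforce simp: mps_index_def)
qed auto

lemma entry_measurable [measurable]:
  "(\<lambda>A. A p) \<in> borel_measurable (PiM K (\<lambda>p. gaussian 0 (site_var D (fst p))))"
  by (intro measurable_PiM_gaussian_coordinate site_var_nonneg)

lemma site_matrix_measurable [measurable]:
  "(\<lambda>A. site_matrix A i a b) \<in> borel_measurable (PiM K (\<lambda>p. gaussian 0 (site_var D (fst p))))"
  unfolding site_matrix_def by measurable

lemma chain_prod_site_matrix_measurable [measurable]:
  "(\<lambda>A. chain_prod (site_matrix A) D' k m u v)
    \<in> borel_measurable (PiM K (\<lambda>p. gaussian 0 (site_var D (fst p))))"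
  by (induction m arbitrary: v) simp_all

lemma tail_norm_sq_measurable [measurable]:
  "(\<lambda>A. tail_norm_sq D' A k) \<in> borel_measurable (PiM K (\<lambda>p. gaussian 0 (site_var D (fst p))))"
  unfolding tail_norm_sq_def frob_sq_def tail_prod_def by measurable

lemma cond_var_measurable [measurable]:
  "cond_var D' k \<in> borel_measurable (PiM K (\<lambda>p. gaussian 0 (site_var D (fst p))))"
  unfolding cond_var_def by measurable

lemma weight_prod_nonneg: "0 \<le> weight_prod k"
  by (simp add: weight_prod_def feature_sq_def sum_nonneg prod_nonneg)

lemma var_scale_nonneg: "0 \<le> var_scale D k"
  by (simp add: var_scale_def weight_prod_nonneg)

lemma tail_norm_sq_nonneg: "0 \<le> tail_norm_sq D A k"
  by (simp add: tail_norm_sq_def frob_sq_def sum_nonneg)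

lemma cond_var_nonneg: "0 \<le> cond_var D k A"
  by (simp add: cond_var_def var_scale_nonneg tail_norm_sq_nonneg)

lemma tail_prod_cong:
  assumes "k \<le> n - 1" "v < D (n - 1)"
    and "\<And>i s a b. k \<le> i \<Longrightarrow> i < n - 1 \<Longrightarrow> s < d i \<Longrightarrow> a < D i \<Longrightarrow> b < D (Suc i) \<Longrightarrow>
      A (i, s, a, b) = A' (i, s, a, b)"
  shows "tail_prod D A k u v = tail_prod D A' k u v"
proof -
  have "k + (n - 1 - k) = n - 1"
    using assms(1) by simp
  then show ?thesis
    unfolding tail_prod_def using assms
    by (intro chain_prod_cong) (auto simp: site_matrix_def)
qed

lemma tail_norm_sq_cong:
  assumes "k \<le> n - 1"
    and "\<And>i s a b. k \<le> i \<Longrightarrow> i < n - 1 \<Longrightarrow> s < d i \<Longrightarrow> a < D i \<Longrightarrow> b < D (Suc i) \<Longrightarrow>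
      A (i, s, a, b) = A' (i, s, a, b)"
  shows "tail_norm_sq D A k = tail_norm_sq D A' k"
  unfolding tail_norm_sq_def frob_sq_def using assms
  by (intro sum.cong refl arg_cong[where f="\<lambda>z. z\<^sup>2"] tail_prod_cong) auto

lemma cond_var_restrict: "k \<le> n - 1 \<Longrightarrow> cond_var D k A = cond_var D k (restrict A (idx D))"
  unfolding cond_var_def
    by (intro arg_cong[where f="(*) _"] tail_norm_sq_cong) (auto simp: mps_index_def)

lemma weight_prod_last: "weight_prod (n - 1) = (\<Prod>i<n. (\<Sum>j<d i. (\<phi> i (x i) j)\<^sup>2) * (\<sigma> i)\<^sup>2)"
proof -
  obtain m where n: "n = Suc m"
    using n_pos by (cases n) auto
  show ?thesis
    unfolding weight_prod_def feature_sq_def feature_def using n by (simp add: mult_ac)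
qed

lemma tail_norm_sq_last: "tail_norm_sq D A (n - 1) = real (D (n - 1))"
  by (simp add: tail_norm_sq_def frob_sq_def tail_prod_def if_distrib[where f="\<lambda>z. z\<^sup>2"]
      sum.delta cong: if_cong)

lemma cond_var_last: "0 < D (n - 1) \<Longrightarrow> cond_var D (n - 1) A = weight_prod (n - 1)"
  using tail_norm_sq_last[of D A] by (simp add: cond_var_def var_scale_def)

lemma mps_output_eq_trace:
  "mps_output n d \<phi> D A x = (\<Sum>u<D 0. \<Sum>v<D (n - 1). site_matrix A (n - 1) v u * tail_prod D A 0 u v)"
proof -
  obtain m where n: "n = Suc m"
    using n_pos by (cases n) auto
  have cyclic: "(\<Prod>i<n. site_matrix A i (a i) (a ((i + 1) mod n)))
      = site_matrix A m (a m) (a 0) * (\<Prod>i<m. site_matrix A i (a i) (a (Suc i)))"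
    for a :: "nat \<Rightarrow> nat"
  proof -
    have "(\<Prod>i<m. site_matrix A i (a i) (a ((i + 1) mod n)))
      = (\<Prod>i<m. site_matrix A i (a i) (a (Suc i)))"
      by (intro prod.cong refl) (simp add: n)
    then show ?thesis
      by (simp add: n mult.commute)
  qed
  have "mps_output n d \<phi> D A x
      = (\<Sum>a\<in>PiE {..<n} (\<lambda>i. {..<D i}). \<Prod>i<n. site_matrix A i (a i) (a ((i + 1) mod n)))"
    unfolding mps_output_def site_matrix_def feature_def
    by (subst sum.swap) (simp add: prod.distrib[symmetric] prod_sum_PiE)
  also have "\<dots> = (\<Sum>a\<in>PiE {..<Suc m} (\<lambda>i. {..<D i}).
      site_matrix A m (a m) (a 0) * (\<Prod>i<m. site_matrix A i (a i) (a (Suc i))))"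
    unfolding cyclic by (simp add: n)
  also have "\<dots> = (\<Sum>u<D 0. \<Sum>v<D m. site_matrix A m v u * chain_prod (site_matrix A) D 0 m u v)"
    by (rule sum_PiE_path_eq_chain_prod)
  finally show ?thesis
    unfolding tail_prod_def using n by simp
qed

definition last_site_idx :: "(nat \<Rightarrow> nat) \<Rightarrow> (nat \<times> nat \<times> nat \<times> nat) set" where
  "last_site_idx D = (\<lambda>(u, v, s). (n - 1, s, v, u)) ` ({..<D 0} \<times> {..<D (n - 1)} \<times> {..<d (n - 1)})"

definition last_site_coeff ::
    "(nat \<Rightarrow> nat) \<Rightarrow> nat \<times> nat \<times> nat \<times> nat \<Rightarrow> (nat \<times> nat \<times> nat \<times> nat \<Rightarrow> real) \<Rightarrow> real" where
  "last_site_coeff D p A = (case p of (i, s, v, u) \<Rightarrow> feature (n - 1) s * tail_prod D A 0 u v)"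

lemma last_site_idx_subset: "last_site_idx D \<subseteq> idx D"
  using n_pos by (auto simp: last_site_idx_def mps_index_def)

lemma sum_last_site_idx:
  "(\<Sum>p\<in>last_site_idx D. f p) = (\<Sum>u<D 0. \<Sum>v<D (n - 1). \<Sum>s<d (n - 1). f (n - 1, s, v, u))"
proof -
  have "inj_on (\<lambda>(u, v, s). (n - 1, s, v, u)) X" for X :: "(nat \<times> nat \<times> nat) set"
    by (auto simp: inj_on_def)
  then show ?thesis
    unfolding last_site_idx_def by (subst sum.reindex) (simp_all add: sum.cartesian_product')
qed

lemma mps_output_eq_last_site_sum:
  "mps_output n d \<phi> D A x = (\<Sum>p\<in>last_site_idx D. A p * last_site_coeff D p A)"
  unfolding mps_output_eq_trace sum_last_site_idx last_site_coeff_def site_matrix_def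
  by (simp add: sum_distrib_left mult_ac)

lemma sum_last_site_coeff_sq:
  "(\<Sum>p\<in>last_site_idx D. site_var D (n - 1) * (last_site_coeff D p A)\<^sup>2) = cond_var D 0 A"
proof -
  have "cond_var D 0 A
      = (\<Sum>u<D 0. \<Sum>v<D (n - 1). site_var D (n - 1) * (feature_sq (n - 1) * (tail_prod D A 0 u v)\<^sup>2))"
    using n_pos by (simp add: cond_var_def var_scale_def tail_norm_sq_def frob_sq_def
        weight_prod_def site_var_def sum_distrib_left sum_divide_distrib mult_ac)
  then show ?thesis
    by (simp add: sum_last_site_idx last_site_coeff_def feature_sq_def power_mult_distrib
        sum_distrib_left sum_distrib_right mult_ac)
qed

lemma mps_output_measurable [measurable]:
  "(\<lambda>A. mps_output n d \<phi> D A x) \<in> borel_measurable (entries D)"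
  unfolding mps_output_eq_trace tail_prod_def by measurable

lemma real_distribution_mps_law: "real_distribution (mps_law n d \<phi> \<sigma> x D)"
  unfolding mps_law_def mps_entries_eq
  by (intro prob_space.real_distribution_distr prob_space_entries mps_output_measurable)

lemma char_mps_law:
  "char (mps_law n d \<phi> \<sigma> x D) t
    = complex_of_real (\<integral>A. exp (- (t\<^sup>2 * cond_var D 0 A) / 2) \<partial>entries D)"
proof -
  have "char (mps_law n d \<phi> \<sigma> x D) t
      = (\<integral>A. iexp (t * (\<Sum>p\<in>last_site_idx D. A p * last_site_coeff D p A)) \<partial>entries D)"
    unfolding char_def mps_law_def mps_entries_eq
    by (simp add: integral_distr mps_output_eq_last_site_sum[symmetric])
  also have "\<dots> = (\<integral>A. complex_of_real (exp (- (t\<^sup>2 *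
      (\<Sum>p\<in>last_site_idx D. site_var D (fst p) * (last_site_coeff D p A)\<^sup>2)) / 2)) \<partial>entries D)"
  proof (rule integral_PiM_iexp_conditionally_gaussian[OF site_var_nonneg finite_idx
      last_site_idx_subset])
    fix p assume p: "p \<in> last_site_idx D"
    then obtain s v u where p_eq: "p = (n - 1, s, v, u)" and v: "v < D (n - 1)"
      by (auto simp: last_site_idx_def)
    show "last_site_coeff D p \<in> borel_measurable (PiM (idx D - last_site_idx D)
        (\<lambda>p. gaussian 0 (site_var D (fst p))))"
      unfolding last_site_coeff_def p_eq tail_prod_def by measurable
    fix A
    show "last_site_coeff D p A = last_site_coeff D p (restrict A (idx D - last_site_idx D))"
      unfolding last_site_coeff_def p_eq using v
      by (auto intro!: arg_cong[where f="(*) _"] tail_prod_cong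
          simp: last_site_idx_def mps_index_def)
  qed
  also have "\<dots> = complex_of_real (\<integral>A. exp (- (t\<^sup>2 * cond_var D 0 A) / 2) \<partial>entries D)"
  proof -
    have "(\<Sum>p\<in>last_site_idx D. site_var D (fst p) * (last_site_coeff D p A)\<^sup>2)
      = cond_var D 0 A" for A
      by (subst sum_last_site_coeff_sq[symmetric]) (auto intro!: sum.cong simp: last_site_idx_def)
    then show ?thesis
      by simp
  qed
  finally show ?thesis .
qed

text \<open>The mixture \<open>Z \<cdot> sqrt (cond_var D k)\<close> is realised by one extra standard normal coordinate
  \<open>Z\<close>, placed at an index outside every \<^term>\<open>idx D\<close>.\<close>

definition noise_idx :: "nat \<times> nat \<times> nat \<times> nat" where
  "noise_idx = (n, 0, 0, 0)"

definition ext_var :: "(nat \<Rightarrow> nat) \<Rightarrow> nat \<times> nat \<times> nat \<times> nat \<Rightarrow> real" where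
  "ext_var D p = (if p = noise_idx then 1 else site_var D (fst p))"

definition mixture :: "(nat \<Rightarrow> nat) \<Rightarrow> nat \<Rightarrow> real measure" where
  "mixture D k = distr (PiM (insert noise_idx (idx D)) (\<lambda>p. gaussian 0 (ext_var D p))) borel
     (\<lambda>A. A noise_idx * sqrt (cond_var D k A))"

lemma noise_idx_notin: "noise_idx \<notin> idx D"
  by (simp add: noise_idx_def mps_index_def)

lemma ext_var_nonneg: "0 \<le> ext_var D p"
  by (simp add: ext_var_def site_var_nonneg)

lemma PiM_ext_var_eq: "PiM (idx D) (\<lambda>p. gaussian 0 (ext_var D p)) = entries D"
  using noise_idx_notin by (intro PiM_cong refl) (auto simp: ext_var_def)

lemma cond_var_measurable_ext:
  "cond_var D k \<in> borel_measurable (PiM (idx D) (\<lambda>p. gaussian 0 (ext_var D p)))"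
  unfolding PiM_ext_var_eq by measurable

lemma mixture_variable_measurable:
  assumes "k \<le> n - 1"
  shows "(\<lambda>A. A noise_idx * sqrt (cond_var D k A))
    \<in> borel_measurable (PiM (insert noise_idx (idx D)) (\<lambda>p. gaussian 0 (ext_var D p)))"
proof -
  have "cond_var D k \<in> borel_measurable (PiM (insert noise_idx (idx D)) (\<lambda>p. gaussian 0 (ext_var D p)))"
    using assms
    by (intro measurable_PiM_restrict_dependent[OF _ cond_var_measurable_ext] cond_var_restrict) auto
  moreover have "(\<lambda>A. A noise_idx)
      \<in> borel_measurable (PiM (insert noise_idx (idx D)) (\<lambda>p. gaussian 0 (ext_var D p)))"
    by (intro measurable_PiM_gaussian_coordinate ext_var_nonneg)
  ultimately show ?thesis
    by measurable
qed

lemma real_distribution_mixture: "k \<le> n - 1 \<Longrightarrow> real_distribution (mixture D k)"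
  unfolding mixture_def
  by (intro prob_space.real_distribution_distr prob_space_PiM mixture_variable_measurable)
     (simp add: prob_space_gaussian ext_var_nonneg)

lemma char_mixture:
  assumes k: "k \<le> n - 1"
  shows "char (mixture D k) t = complex_of_real (\<integral>A. exp (- (t\<^sup>2 * cond_var D k A) / 2) \<partial>entries D)"
proof -
  let ?I = "insert noise_idx (idx D)" and ?G = "\<lambda>p. gaussian 0 (ext_var D p)"
  have I: "finite ?I" "{noise_idx} \<subseteq> ?I" and I_diff: "?I - {noise_idx} = idx D"
    using finite_idx noise_idx_notin by auto
  have "char (mixture D k) t
    = (\<integral>A. iexp (t * (\<Sum>j\<in>{noise_idx}. A j * sqrt (cond_var D k A))) \<partial>PiM ?I ?G)"
    unfolding char_def mixture_def
    using mixture_variable_measurable[OF k] by (simp add: integral_distr)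
  also have "\<dots> = (\<integral>A. complex_of_real (exp (- (t\<^sup>2 *
      (\<Sum>j\<in>{noise_idx}. ext_var D j * (sqrt (cond_var D k A))\<^sup>2)) / 2)) \<partial>PiM ?I ?G)"
  proof (rule integral_PiM_iexp_conditionally_gaussian[OF ext_var_nonneg I])
    show "(\<lambda>A. sqrt (cond_var D k A)) \<in> borel_measurable (PiM (?I - {noise_idx}) ?G)"
      unfolding I_diff PiM_ext_var_eq by measurable
    show "sqrt (cond_var D k A) = sqrt (cond_var D k (restrict A (?I - {noise_idx})))" for A
      unfolding I_diff using k by (simp flip: cond_var_restrict)
  qed
  also have "\<dots> = (\<integral>A. complex_of_real (exp (- (t\<^sup>2 * cond_var D k A) / 2)) \<partial>PiM ?I ?G)"
    by (simp add: ext_var_def cond_var_nonneg)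
  also have "\<dots> = (\<integral>A. complex_of_real (exp (- (t\<^sup>2 * cond_var D k A) / 2)) \<partial>PiM (idx D) ?G)"
  proof (rule integral_PiM_restrict[OF _ I(1)])
    show "(\<lambda>A. complex_of_real (exp (- (t\<^sup>2 * cond_var D k A) / 2))) \<in> borel_measurable
      (PiM (idx D) ?G)"
      unfolding PiM_ext_var_eq by measurable
  qed (use k in \<open>auto simp: prob_space_gaussian ext_var_nonneg intro: cond_var_restrict\<close>)
  finally show ?thesis
    by (simp add: PiM_ext_var_eq)
qed

section \<open>Integrating out one site\<close>

definition site_idx :: "(nat \<Rightarrow> nat) \<Rightarrow> nat \<Rightarrow> (nat \<times> nat \<times> nat \<times> nat) set" where
  "site_idx D k = (\<lambda>(s, a, c). (k, s, a, c)) ` ({..<d k} \<times> {..<D k} \<times> {..<D (Suc k)})"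

definition row_idx :: "(nat \<Rightarrow> nat) \<Rightarrow> nat \<Rightarrow> nat \<Rightarrow> (nat \<times> nat \<times> nat \<times> nat) set" where
  "row_idx D k a = (\<lambda>(s, c). (k, s, a, c)) ` ({..<d k} \<times> {..<D (Suc k)})"

definition row_prod ::
    "(nat \<Rightarrow> nat) \<Rightarrow> nat \<Rightarrow> (nat \<Rightarrow> nat \<Rightarrow> real) \<Rightarrow> (nat \<times> nat \<times> nat \<times> nat \<Rightarrow> real) \<Rightarrow> nat \<Rightarrow> nat \<Rightarrow> real"
  where "row_prod D k R Y a b = (\<Sum>c<D (Suc k). site_matrix Y k a c * R c b)"

definition row_coeff :: "nat \<Rightarrow> (nat \<Rightarrow> nat \<Rightarrow> real) \<Rightarrow> nat \<Rightarrow> nat \<times> nat \<times> nat \<times> nat \<Rightarrow> real" where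
  "row_coeff k R b p = (case p of (i, s, a, c) \<Rightarrow> feature k s * R c b)"

abbreviation site_entries :: "(nat \<Rightarrow> nat) \<Rightarrow> nat \<Rightarrow> (nat \<times> nat \<times> nat \<times> nat \<Rightarrow> real) measure" where
  "site_entries D k \<equiv> PiM (site_idx D k) (\<lambda>p. gaussian 0 (site_var D (fst p)))"

lemma finite_site_idx: "finite (site_idx D k)"
  by (simp add: site_idx_def)

lemma prob_space_site_entries: "prob_space (site_entries D k)"
  by (intro prob_space_PiM prob_space_site_law)

lemma site_idx_subset: "Suc k < n \<Longrightarrow> site_idx D k \<subseteq> idx D"
  by (auto simp: site_idx_def mps_index_def)

lemma site_idx_nonempty:
  assumes "Suc k < n" "\<forall>i<n. 1 \<le> D i"
  shows "site_idx D k \<noteq> {}"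
proof -
  have "k < n"
    using assms(1) by simp
  then have "0 < d k" "0 < D k" "0 < D (Suc k)"
    using assms d_pos by (auto simp: Suc_le_eq)
  then show ?thesis
    by (auto simp: site_idx_def)
qed

lemma fst_site_idx: "p \<in> site_idx D k \<Longrightarrow> fst p = k"
  by (auto simp: site_idx_def)

lemma mem_row_idx:
  "(i, s, a', c) \<in> row_idx D k a \<longleftrightarrow> i = k \<and> s < d k \<and> a' = a \<and> c < D (Suc k)"
  by (auto simp: row_idx_def)

lemma row_idx_subset: "a < D k \<Longrightarrow> row_idx D k a \<subseteq> site_idx D k"
  by (auto simp: row_idx_def site_idx_def)

lemma row_idx_disjoint: "a \<noteq> a' \<Longrightarrow> row_idx D k a \<inter> row_idx D k a' = {}"
  by (auto simp: row_idx_def)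

lemma sum_row_idx: "(\<Sum>p\<in>row_idx D k a. f p) = (\<Sum>s<d k. \<Sum>c<D (Suc k). f (k, s, a, c))"
proof -
  have "inj_on (\<lambda>(s, c). (k, s, a, c)) X" for X :: "(nat \<times> nat) set"
    by (auto simp: inj_on_def)
  then show ?thesis
    unfolding row_idx_def by (subst sum.reindex) (simp_all add: sum.cartesian_product')
qed

lemma card_row_idx: "card (row_idx D k a) = d k * D (Suc k)"
  unfolding row_idx_def by (subst card_image) (auto simp: inj_on_def card_cartesian_product)

lemma row_prod_eq_linear: "row_prod D k R Y a b = (\<Sum>p\<in>row_idx D k a. row_coeff k R b p * Y p)"
  unfolding sum_row_idx row_prod_def site_matrix_def row_coeff_def sum_distrib_right
  by (subst sum.swap) (simp add: mult_ac)

lemma sum_row_coeff_sq: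
  "(\<Sum>b<D (n - 1). \<Sum>p\<in>row_idx D k a. (row_coeff k R b p)\<^sup>2) = feature_sq k * frob_sq D (Suc k) R"
proof -
  have "(\<Sum>b<D (n - 1). \<Sum>p\<in>row_idx D k a. (row_coeff k R b p)\<^sup>2)
      = (\<Sum>b<D (n - 1). \<Sum>s<d k. \<Sum>c<D (Suc k). (feature k s)\<^sup>2 * (R c b)\<^sup>2)"
    by (simp add: sum_row_idx row_coeff_def power_mult_distrib)
  also have "\<dots> = (\<Sum>s<d k. \<Sum>c<D (Suc k). \<Sum>b<D (n - 1). (feature k s)\<^sup>2 * (R c b)\<^sup>2)"
    by (subst sum.swap) (intro sum.cong refl sum.swap)
  also have "\<dots> = feature_sq k * frob_sq D (Suc k) R"
    unfolding feature_sq_def frob_sq_def sum_distrib_right by (simp add: sum_distrib_left)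
  finally show ?thesis .
qed

lemma sum_row_prod_sq_le:
  "(\<Sum>b<D (n - 1). (row_prod D k R Y a b)\<^sup>2)
    \<le> (\<Sum>p\<in>row_idx D k a. (Y p)\<^sup>2) * (feature_sq k * frob_sq D (Suc k) R)"
proof -
  have "(\<Sum>b<D (n - 1). (row_prod D k R Y a b)\<^sup>2)
      \<le> (\<Sum>b<D (n - 1). (\<Sum>p\<in>row_idx D k a. (row_coeff k R b p)\<^sup>2) * (\<Sum>p\<in>row_idx D k a. (Y p)\<^sup>2))"
    unfolding row_prod_eq_linear by (intro sum_mono Cauchy_Schwarz_ineq_sum)
  also have "\<dots> = (\<Sum>p\<in>row_idx D k a. (Y p)\<^sup>2) *
    (\<Sum>b<D (n - 1). \<Sum>p\<in>row_idx D k a. (row_coeff k R b p)\<^sup>2)"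
    by (simp add: sum_distrib_left mult.commute)
  finally show ?thesis
    by (simp only: sum_row_coeff_sq)
qed

lemma row_prod_measurable [measurable]:
  "(\<lambda>Y. row_prod D k R Y a b) \<in> borel_measurable (PiM K (\<lambda>p. gaussian 0 (site_var D' (fst p))))"
  unfolding row_prod_def by measurable

lemma row_prod_restrict: "row_prod D k R Y a b = row_prod D k R (restrict Y (row_idx D k a)) a b"
  unfolding row_prod_def site_matrix_def by (intro sum.cong refl) (auto simp: mem_row_idx)

lemma integral_row_prod_sq:
  assumes a: "a < D k"
  shows "integrable (site_entries D k)
      (\<lambda>Y. (row_prod D k R Y a b)\<^sup>2)"
    and "(\<integral>Y. (row_prod D k R Y a b)\<^sup>2 \<partial>site_entries D k)
      = site_var D k * (\<Sum>p\<in>row_idx D k a. (row_coeff k R b p)\<^sup>2)"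
proof -
  note square = integral_PiM_gaussian_linear_square[where w="\<lambda>p. site_var D (fst p)"
      and r="row_coeff k R b", OF site_var_nonneg finite_site_idx row_idx_subset[where D=D, OF a]]
  show "integrable (site_entries D k)
      (\<lambda>Y. (row_prod D k R Y a b)\<^sup>2)"
    using square(1) by (simp add: row_prod_eq_linear)
  have "(\<Sum>p\<in>row_idx D k a. site_var D (fst p) * (row_coeff k R b p)\<^sup>2)
      = site_var D k * (\<Sum>p\<in>row_idx D k a. (row_coeff k R b p)\<^sup>2)"
    by (auto simp: sum_distrib_left row_idx_def intro!: sum.cong)
  then show "(\<integral>Y. (row_prod D k R Y a b)\<^sup>2 \<partial>site_entries D k)
      = site_var D k * (\<Sum>p\<in>row_idx D k a. (row_coeff k R b p)\<^sup>2)"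
    using square(2) by (simp add: row_prod_eq_linear)
qed

text \<open>Conditionally on the other sites, \<^term>\<open>cond_var D k\<close> is the sum over the rows \<open>a\<close> of
  \<open>B k\<close> of the independent terms \<^term>\<open>row_energy D k R Y a\<close>, and \<^term>\<open>cond_var D (Suc k)\<close> is
  the sum of their means.\<close>

definition row_energy ::
    "(nat \<Rightarrow> nat) \<Rightarrow> nat \<Rightarrow> (nat \<Rightarrow> nat \<Rightarrow> real) \<Rightarrow> (nat \<times> nat \<times> nat \<times> nat \<Rightarrow> real) \<Rightarrow> nat \<Rightarrow> real"
  where "row_energy D k R Y a = var_scale D k * (\<Sum>b<D (n - 1). (row_prod D k R Y a b)\<^sup>2)"

definition row_energy_mean :: "(nat \<Rightarrow> nat) \<Rightarrow> nat \<Rightarrow> (nat \<Rightarrow> nat \<Rightarrow> real) \<Rightarrow> real" where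
  "row_energy_mean D k R = var_scale D k * site_var D k * feature_sq k * frob_sq D (Suc k) R"

lemma row_energy_measurable [measurable]:
  "(\<lambda>Y. row_energy D k R Y a) \<in> borel_measurable (PiM K (\<lambda>p. gaussian 0 (site_var D' (fst p))))"
  unfolding row_energy_def by measurable

lemma row_energy_restrict: "row_energy D k R Y a = row_energy D k R (restrict Y (row_idx D k a)) a"
  unfolding row_energy_def by (subst row_prod_restrict) simp

lemma row_energy_nonneg: "0 \<le> row_energy D k R Y a"
  by (simp add: row_energy_def var_scale_nonneg sum_nonneg)

lemma integral_row_energy:
  assumes "a < D k"
  shows "integrable (site_entries D k) (\<lambda>Y. row_energy D k R Y a)"
    and "(\<integral>Y. row_energy D k R Y a \<partial>site_entries D k) = row_energy_mean D k R"
  using integral_row_prod_sq[where D=D and k=k, OF assms]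
    sum_row_coeff_sq[where D=D and k=k and a=a and R=R]
  by (simp_all add: row_energy_def row_energy_mean_def Bochner_Integration.integral_sum
      sum_distrib_left[symmetric] mult_ac)

lemma row_energy_sq_le:
  "(row_energy D k R Y a)\<^sup>2 \<le> (var_scale D k * feature_sq k * frob_sq D (Suc k) R)\<^sup>2
     * (real (card (row_idx D k a)) * (\<Sum>p\<in>row_idx D k a. (Y p) ^ 4))"
proof -
  let ?q = "\<Sum>p\<in>row_idx D k a. (Y p)\<^sup>2"
  have "row_energy D k R Y a \<le> var_scale D k * (?q * (feature_sq k * frob_sq D (Suc k) R))"
    unfolding row_energy_def by (intro mult_left_mono sum_row_prod_sq_le var_scale_nonneg)
  then have "(row_energy D k R Y a)\<^sup>2 \<le>
    (var_scale D k * (?q * (feature_sq k * frob_sq D (Suc k) R)))\<^sup>2"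
    by (intro power_mono row_energy_nonneg)
  also have "\<dots> = (var_scale D k * feature_sq k * frob_sq D (Suc k) R)\<^sup>2 * ?q\<^sup>2"
    by (simp add: power_mult_distrib mult_ac)
  also have "?q\<^sup>2 \<le> real (card (row_idx D k a)) * (\<Sum>p\<in>row_idx D k a. (Y p) ^ 4)"
    using sum_squared_le_sum_of_squares[of "\<lambda>p. (Y p)\<^sup>2" "row_idx D k a"]
    by (simp add: mult.commute flip: power_mult)
  finally show ?thesis
    by (simp add: mult_left_mono)
qed

definition fluct_const :: "(nat \<Rightarrow> nat) \<Rightarrow> nat \<Rightarrow> real" where
  "fluct_const D k = sqrt 3 * real (d k * D (Suc k)) * weight_prod k * (\<sigma> k)\<^sup>2 * feature_sq k
     / sqrt (real (D (Suc k)) * real (D (n - 1)))"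

lemma fluct_const_nonneg: "0 \<le> fluct_const D k"
  using weight_prod_nonneg[of k] by (simp add: fluct_const_def feature_sq_def sum_nonneg)

lemma row_energy_bound_eq:
  assumes k: "Suc k < n" and D: "\<forall>i<n. 1 \<le> D i"
  shows "3 * (var_scale D k * feature_sq k * r * real (d k * D (Suc k)) * site_var D k)\<^sup>2
    = (fluct_const D k * r / real (D k))\<^sup>2"
proof -
  define q where "q = sqrt (real (D k))"
  have pos: "0 < q" "0 < sqrt (real (D (Suc k)))" "0 < sqrt (real (D (n - 1)))"
    using k D by (simp_all add: q_def Suc_le_eq)
  have "var_scale D k = weight_prod k / (q * sqrt (real (D (n - 1))))"
    by (simp add: var_scale_def q_def real_sqrt_mult)
  moreover have "site_var D k = (\<sigma> k)\<^sup>2 / (q * sqrt (real (D (Suc k))))"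
    using k by (simp add: site_var_def q_def real_sqrt_mult)
  ultimately have "sqrt 3 *
    (var_scale D k * feature_sq k * r * real (d k * D (Suc k)) * site_var D k)
      = sqrt 3 * (weight_prod k / (q * sqrt (real (D (n - 1)))) * feature_sq k * r
          * real (d k * D (Suc k))
          * ((\<sigma> k)\<^sup>2 / (q * sqrt (real (D (Suc k))))))"
    by (simp only:)
  also have "\<dots> = fluct_const D k * r / (q * q)"
    using pos by (simp add: fluct_const_def real_sqrt_mult field_simps)
  finally have root: "sqrt 3 *
    (var_scale D k * feature_sq k * r * real (d k * D (Suc k)) * site_var D k)
      = fluct_const D k * r / real (D k)"
    by (simp add: q_def)
  have "3 * (var_scale D k * feature_sq k * r * real (d k * D (Suc k)) * site_var D k)\<^sup>2
      = (sqrt 3 * (var_scale D k * feature_sq k * r * real (d k * D (Suc k)) * site_var D k))\<^sup>2"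
    by (simp add: power_mult_distrib)
  then show ?thesis
    by (simp only: root)
qed

lemma integral_row_energy_sq_le:
  assumes k: "Suc k < n" and D: "\<forall>i<n. 1 \<le> D i" and a: "a < D k"
  shows "integrable (site_entries D k) (\<lambda>Y. (row_energy D k R Y a)\<^sup>2)"
    and "(\<integral>Y. (row_energy D k R Y a)\<^sup>2 \<partial>site_entries D k) \<le>
      (fluct_const D k * frob_sq D (Suc k) R / real (D k))\<^sup>2"
proof -
  let ?g = "\<lambda>Y. (var_scale D k * feature_sq k * frob_sq D (Suc k) R)\<^sup>2
    * (real (card (row_idx D k a)) * (\<Sum>p\<in>row_idx D k a. (Y p) ^ 4))"
  have row: "p \<in> site_idx D k \<and> fst p = k" if "p \<in> row_idx D k a" for p
  proof
    show "p \<in> site_idx D k"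
      using that row_idx_subset[where D=D and k=k, OF a] by blast
    then show "fst p = k"
      by (rule fst_site_idx)
  qed
  have power4: "integrable (site_entries D k) (\<lambda>Y. (Y p) ^ 4)"
      "(\<integral>Y. (Y p) ^ 4 \<partial>site_entries D k) = 3 * (site_var D k)\<^sup>2" if "p \<in> row_idx D k a" for p
    using row[OF that] integrable_PiM_gaussian_power[OF site_var_nonneg]
      integral_PiM_gaussian_power4[OF site_var_nonneg] by auto
  have g: "integrable (site_entries D k) ?g"
    using power4 by (intro integrable_mult_right Bochner_Integration.integrable_sum) auto
  show int: "integrable (site_entries D k) (\<lambda>Y. (row_energy D k R Y a)\<^sup>2)"
    by (rule Bochner_Integration.integrable_bound[OF g])
       (auto intro!: AE_I2 row_energy_sq_le[THEN order_trans] abs_ge_self)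
  have "(\<integral>Y. (row_energy D k R Y a)\<^sup>2 \<partial>site_entries D k) \<le> integral\<^sup>L (site_entries D k) ?g"
    by (intro integral_mono int g row_energy_sq_le)
  also have "\<dots> = (var_scale D k * feature_sq k * frob_sq D (Suc k) R)\<^sup>2
      * (real (card (row_idx D k a)) * (real (card (row_idx D k a)) * (3 * (site_var D k)\<^sup>2)))"
    using power4 by (simp add: Bochner_Integration.integral_sum)
  also have "\<dots> = 3 * (var_scale D k * feature_sq k * frob_sq D (Suc k) R * real (d k * D (Suc k))
      * site_var D k)\<^sup>2"
    by (simp add: card_row_idx power_mult_distrib power2_eq_square mult_ac)
  finally show "(\<integral>Y. (row_energy D k R Y a)\<^sup>2 \<partial>site_entries D k) \<le>
    (fluct_const D k * frob_sq D (Suc k) R / real (D k))\<^sup>2"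
    by (simp only: row_energy_bound_eq[OF k D])
qed

abbreviation merge_site ::
    "(nat \<Rightarrow> nat) \<Rightarrow> nat \<Rightarrow> (nat \<times> nat \<times> nat \<times> nat \<Rightarrow> real) \<Rightarrow> (nat \<times> nat \<times> nat \<times> nat \<Rightarrow> real)
      \<Rightarrow> (nat \<times> nat \<times> nat \<times> nat \<Rightarrow> real)"
  where "merge_site D k X Y \<equiv> merge (idx D - site_idx D k) (site_idx D k) (X, Y)"

abbreviation other_entries :: "(nat \<Rightarrow> nat) \<Rightarrow> nat \<Rightarrow> (nat \<times> nat \<times> nat \<times> nat \<Rightarrow> real) measure" where
  "other_entries D k \<equiv> PiM (idx D - site_idx D k) (\<lambda>p. gaussian 0 (site_var D (fst p)))"

lemma nn_integral_split_site:
  assumes k: "Suc k < n" and F: "F \<in> borel_measurable (entries D)"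
  shows "integral\<^sup>N (entries D) F
    = (\<integral>\<^sup>+X. (\<integral>\<^sup>+Y. F (merge_site D k X Y) \<partial>site_entries D k) \<partial>other_entries D k)"
proof -
  interpret product_sigma_finite "\<lambda>p. gaussian 0 (site_var D (fst p))"
    by (simp add: product_sigma_finite_def prob_space_site_law prob_space_imp_sigma_finite)
  have split: "(idx D - site_idx D k) \<union> site_idx D k = idx D"
    using site_idx_subset[OF k] by auto
  have "integral\<^sup>N (entries D) F
      = integral\<^sup>N (PiM ((idx D - site_idx D k) \<union> site_idx D k)
          (\<lambda>p. gaussian 0 (site_var D (fst p)))) F"
    by (simp only: split)
  also have "\<dots> = (\<integral>\<^sup>+X. (\<integral>\<^sup>+Y. F (merge_site D k X Y) \<partial>site_entries D k) \<partial>other_entries D k)"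
    using F site_idx_subset[OF k]
    by (intro product_nn_integral_fold) (auto simp: finite_idx finite_site_idx Un_absorb2)
  finally show ?thesis .
qed

lemma merge_site_other: "p \<in> idx D \<Longrightarrow> p \<notin> site_idx D k \<Longrightarrow> merge_site D k X Y p = X p"
  by simp

lemma merge_site_site: "p \<in> site_idx D k \<Longrightarrow> merge_site D k X Y p = Y p"
  by simp

lemma site_matrix_merge_site:
  "a < D k \<Longrightarrow> c < D (Suc k) \<Longrightarrow> site_matrix (merge_site D k X Y) k a c = site_matrix Y k a c"
  unfolding site_matrix_def by (intro sum.cong refl merge_site_site) (auto simp: site_idx_def)

lemma tail_prod_Suc_merge_site:
  assumes "Suc k < n" "b < D (n - 1)"
  shows "tail_prod D (merge_site D k X Y) (Suc k) c b = tail_prod D X (Suc k) c b"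
  using assms by (intro tail_prod_cong merge_site_other) (auto simp: site_idx_def mps_index_def)

lemma tail_prod_merge_site:
  assumes k: "Suc k < n" and a: "a < D k" and b: "b < D (n - 1)"
  shows "tail_prod D (merge_site D k X Y) k a b = row_prod D k (tail_prod D X (Suc k)) Y a b"
proof -
  have len: "n - 1 - k = Suc (n - 1 - Suc k)" "Suc k + (n - 1 - Suc k) = n - 1"
    using k by auto
  have b': "b < D (Suc k + (n - 1 - Suc k))"
    using b by (simp only: len(2))
  have "tail_prod D (merge_site D k X Y) k a b
      = (\<Sum>c<D (Suc k).
          site_matrix (merge_site D k X Y) k a c * tail_prod D (merge_site D k X Y) (Suc k) c b)"
    unfolding tail_prod_def len(1) by (rule chain_prod_Suc_left[OF a b'])
  also have "\<dots> = row_prod D k (tail_prod D X (Suc k)) Y a b"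
    unfolding row_prod_def using a k b
    by (intro sum.cong refl) (simp add: site_matrix_merge_site tail_prod_Suc_merge_site)
  finally show ?thesis .
qed

lemma tail_norm_sq_merge_site:
  "Suc k < n \<Longrightarrow> tail_norm_sq D (merge_site D k X Y) k
    = (\<Sum>a<D k. \<Sum>b<D (n - 1). (row_prod D k (tail_prod D X (Suc k)) Y a b)\<^sup>2)"
  unfolding tail_norm_sq_def frob_sq_def by (simp add: tail_prod_merge_site)

lemma tail_norm_sq_Suc_merge_site:
  "Suc k < n \<Longrightarrow> tail_norm_sq D (merge_site D k X Y) (Suc k) = tail_norm_sq D X (Suc k)"
  unfolding tail_norm_sq_def frob_sq_def by (simp add: tail_prod_Suc_merge_site)

lemma var_scale_Suc:
  assumes k: "Suc k < n" and "0 < D k"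
  shows "real (D k) * var_scale D k * site_var D k * feature_sq k = var_scale D (Suc k)"
proof -
  define q where "q = sqrt (real (D k))"
  have q: "real (D k) = q * q" "0 < q"
    using \<open>0 < D k\<close> by (simp_all add: q_def)
  have "real (D k) * var_scale D k * site_var D k * feature_sq k
      = (q * q) * (weight_prod k / (q * sqrt (real (D (n - 1)))))
          * ((\<sigma> k)\<^sup>2 / (q * sqrt (real (D (Suc k))))) * feature_sq k"
    using k by (simp add: var_scale_def site_var_def q_def real_sqrt_mult)
  also have "\<dots> = weight_prod k * ((\<sigma> k)\<^sup>2 * feature_sq k) /
    (sqrt (real (D (Suc k))) * sqrt (real (D (n - 1))))"
    using q by (simp add: field_simps)
  also have "\<dots> = var_scale D (Suc k)"
    by (simp add: var_scale_def weight_prod_def real_sqrt_mult mult_ac)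
  finally show ?thesis .
qed

lemma sum_centered_row_energy:
  assumes k: "Suc k < n" and "0 < D k"
  shows "(\<Sum>a<D k.
      row_energy D k (tail_prod D X (Suc k)) Y a - row_energy_mean D k (tail_prod D X (Suc k)))
    = cond_var D k (merge_site D k X Y) - cond_var D (Suc k) (merge_site D k X Y)"
  using var_scale_Suc[where D=D and k=k, OF assms]
  by (simp add: row_energy_def row_energy_mean_def sum_subtractf sum_distrib_left cond_var_def
      tail_norm_sq_merge_site[OF k] tail_norm_sq_Suc_merge_site[OF k] mult_ac
        flip: tail_norm_sq_def)

lemma integral_sum_centered_row_energy_sq_le:
  assumes k: "Suc k < n" and D: "\<forall>i<n. 1 \<le> D i"
  shows "integrable (site_entries D k) (\<lambda>Y. \<Sum>a<D k. row_energy D k R Y a - row_energy_mean D k R)"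
    and "integrable (site_entries D k)
      (\<lambda>Y. (\<Sum>a<D k. row_energy D k R Y a - row_energy_mean D k R)\<^sup>2)"
    and "(\<integral>Y. (\<Sum>a<D k. row_energy D k R Y a - row_energy_mean D k R)\<^sup>2 \<partial>site_entries D k)
      \<le> real (D k) * (fluct_const D k * frob_sq D (Suc k) R / real (D k))\<^sup>2"
proof -
  interpret prob_space "site_entries D k"
    by (rule prob_space_site_entries)
  let ?Y = "\<lambda>a Y. row_energy D k R Y a - row_energy_mean D k R"
  have int: "integrable (site_entries D k) (?Y a)"
    and int_sq: "integrable (site_entries D k) (\<lambda>Y. (?Y a Y)\<^sup>2)"
    and mean: "integral\<^sup>L (site_entries D k) (?Y a) = 0"
    and var: "(\<integral>Y. (?Y a Y)\<^sup>2 \<partial>site_entries D k) \<le>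
      (fluct_const D k * frob_sq D (Suc k) R / real (D k))\<^sup>2"
    if a: "a < D k" for a
  proof -
    note energy = integral_row_energy[where D=D and k=k and R=R, OF a]
      integral_row_energy_sq_le[where R=R, OF k D a]
    show "integrable (site_entries D k) (?Y a)" "integral\<^sup>L (site_entries D k) (?Y a) = 0"
      using energy by (simp_all add: prob_space)
    show "integrable (site_entries D k) (\<lambda>Y. (?Y a Y)\<^sup>2)"
      using energy by (simp add: power2_diff)
    show "(\<integral>Y. (?Y a Y)\<^sup>2 \<partial>site_entries D k) \<le> (fluct_const D k * frob_sq D (Suc k) R / real (D k))\<^sup>2"
      using integral_centered_square_le[OF energy(1,3)] energy(2,4) by simp
  qed
  show Z: "integrable (site_entries D k) (\<lambda>Y. \<Sum>a<D k. ?Y a Y)"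
    using int by (intro Bochner_Integration.integrable_sum) auto
  show "integrable (site_entries D k) (\<lambda>Y. (\<Sum>a<D k. ?Y a Y)\<^sup>2)"
  proof (rule Bochner_Integration.integrable_bound)
    show "integrable (site_entries D k) (\<lambda>Y. real (D k) * (\<Sum>a<D k. (?Y a Y)\<^sup>2))"
      using int_sq by (intro integrable_mult_right Bochner_Integration.integrable_sum) auto
    show "AE Y in site_entries D k.
        norm ((\<Sum>a<D k. ?Y a Y)\<^sup>2) \<le> norm (real (D k) * (\<Sum>a<D k. (?Y a Y)\<^sup>2))"
      using sum_squared_le_sum_of_squares[of "\<lambda>a. ?Y a _" "{..<D k}"]
      by (intro AE_I2) (simp add: sum_nonneg mult.commute)
  qed (use Z in measurable)
  have "(\<integral>Y. (\<Sum>a<D k. ?Y a Y)\<^sup>2 \<partial>site_entries D k) = (\<Sum>a<D k. \<integral>Y. (?Y a Y)\<^sup>2 \<partial>site_entries D k)"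
  proof (rule integral_PiM_square_sum_indep_blocks[where B="row_idx D k"])
    show "site_idx D k \<noteq> {}"
      by (rule site_idx_nonempty[OF k D])
    show "?Y a Y = ?Y a (restrict Y (row_idx D k a))" for a Y
      by (subst row_energy_restrict) simp
  qed (auto simp: prob_space_site_law row_idx_subset row_idx_disjoint int int_sq mean)
  also have "\<dots> \<le> real (D k) * (fluct_const D k * frob_sq D (Suc k) R / real (D k))\<^sup>2"
    using sum_mono[of "{..<D k}", OF var] by simp
  finally show "(\<integral>Y. (\<Sum>a<D k. ?Y a Y)\<^sup>2 \<partial>site_entries D k)
      \<le> real (D k) * (fluct_const D k * frob_sq D (Suc k) R / real (D k))\<^sup>2" .
qed

lemma nn_integral_abs_cond_var_diff_site_le:
  assumes k: "Suc k < n" and D: "\<forall>i<n. 1 \<le> D i"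
  shows "(\<integral>\<^sup>+Y. ennreal \<bar>cond_var D k (merge_site D k X Y) - cond_var D (Suc k) (merge_site D k X Y)\<bar>
      \<partial>site_entries D k)
    \<le> ennreal (fluct_const D k * tail_norm_sq D X (Suc k) / sqrt (real (D k)))"
proof -
  interpret prob_space "site_entries D k"
    by (rule prob_space_site_entries)
  let ?R = "tail_prod D X (Suc k)"
  have "0 < D k"
    using k D by (simp add: Suc_le_eq)
  note Z = integral_sum_centered_row_energy_sq_le[where R="?R", OF k D]
  have "(\<integral>\<^sup>+Y. ennreal \<bar>cond_var D k (merge_site D k X Y) - cond_var D (Suc k) (merge_site D k X Y)\<bar>
      \<partial>site_entries D k)
      = (\<integral>\<^sup>+Y. ennreal \<bar>\<Sum>a<D k. row_energy D k ?R Y a - row_energy_mean D k ?R\<bar> \<partial>site_entries D k)"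
    by (simp add: sum_centered_row_energy[where D=D and k=k, OF k \<open>0 < D k\<close>])
  also have "\<dots> \<le> ennreal (sqrt (\<integral>Y. (\<Sum>a<D k. row_energy D k ?R Y a - row_energy_mean D k ?R)\<^sup>2
      \<partial>site_entries D k))"
    by (rule nn_integral_abs_le_sqrt_integral_square[OF Z(1,2)])
  also have "\<dots> \<le> ennreal
    (sqrt (real (D k) * (fluct_const D k * tail_norm_sq D X (Suc k) / real (D k))\<^sup>2))"
    using Z(3) by (intro ennreal_leI real_sqrt_le_mono) (simp add: tail_norm_sq_def)
  also have "\<dots> = ennreal (fluct_const D k * tail_norm_sq D X (Suc k) / sqrt (real (D k)))"
    using \<open>0 < D k\<close> fluct_const_nonneg[of D k] tail_norm_sq_nonneg[of D X "Suc k"]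
    by (simp add: real_sqrt_mult_square_divide)
  finally show ?thesis .
qed

lemma nn_integral_abs_cond_var_diff_le:
  assumes k: "Suc k < n" and D: "\<forall>i<n. 1 \<le> D i"
  shows "(\<integral>\<^sup>+A. ennreal \<bar>cond_var D k A - cond_var D (Suc k) A\<bar> \<partial>entries D)
    \<le> (\<integral>\<^sup>+A. ennreal (fluct_const D k * tail_norm_sq D A (Suc k) / sqrt (real (D k))) \<partial>entries D)"
proof -
  interpret site: prob_space "site_entries D k"
    by (rule prob_space_site_entries)
  have "(\<integral>\<^sup>+A. ennreal \<bar>cond_var D k A - cond_var D (Suc k) A\<bar> \<partial>entries D)
      = (\<integral>\<^sup>+X. (\<integral>\<^sup>+Y.
          ennreal \<bar>cond_var D k (merge_site D k X Y) - cond_var D (Suc k) (merge_site D k X Y)\<bar>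
          \<partial>site_entries D k) \<partial>other_entries D k)"
    by (intro nn_integral_split_site k) measurable
  also have "\<dots> \<le> (\<integral>\<^sup>+X. ennreal (fluct_const D k * tail_norm_sq D X (Suc k) / sqrt (real (D k)))
      \<partial>other_entries D k)"
    by (intro nn_integral_mono nn_integral_abs_cond_var_diff_site_le k D)
  also have "\<dots> = (\<integral>\<^sup>+A. ennreal (fluct_const D k * tail_norm_sq D A (Suc k) / sqrt (real (D k)))
      \<partial>entries D)"
    by (subst nn_integral_split_site[OF k])
       (simp_all add: tail_norm_sq_Suc_merge_site[OF k] site.emeasure_space_1)
  finally show ?thesis .
qed

lemma nn_integral_tail_norm_sq_Suc:
  assumes k: "Suc k < n"
  shows "(\<integral>\<^sup>+A. ennreal (tail_norm_sq D A k) \<partial>entries D)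
    = ennreal (real (D k) * site_var D k * feature_sq k) *
      (\<integral>\<^sup>+A. ennreal (tail_norm_sq D A (Suc k)) \<partial>entries D)"
proof -
  interpret site: prob_space "site_entries D k"
    by (rule prob_space_site_entries)
  have inner: "(\<integral>\<^sup>+Y. ennreal (tail_norm_sq D (merge_site D k X Y) k) \<partial>site_entries D k)
      = ennreal (real (D k) * site_var D k * feature_sq k) * ennreal (tail_norm_sq D X (Suc k))"
        for X
  proof -
    note row = integral_row_prod_sq[where D=D and k=k and R="tail_prod D X (Suc k)"]
    have "(\<integral>\<^sup>+Y. ennreal (tail_norm_sq D (merge_site D k X Y) k) \<partial>site_entries D k)
        = ennreal (\<Sum>a<D k. \<Sum>b<D (n - 1). site_var D k
            * (\<Sum>p\<in>row_idx D k a. (row_coeff k (tail_prod D X (Suc k)) b p)\<^sup>2))"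
      unfolding tail_norm_sq_merge_site[OF k] using row
      by (subst nn_integral_eq_integral)
        (auto intro!: sum_nonneg simp: Bochner_Integration.integral_sum)
    also have "\<dots> = ennreal (real (D k) * site_var D k * feature_sq k * tail_norm_sq D X (Suc k))"
      using sum_row_coeff_sq[where D=D and k=k and R="tail_prod D X (Suc k)"]
      by (simp add: sum_distrib_left[symmetric] tail_norm_sq_def mult_ac)
    finally show ?thesis
      by (simp add: ennreal_mult'' site_var_nonneg feature_sq_def sum_nonneg tail_norm_sq_nonneg
          mult_ac)
  qed
  have "(\<integral>\<^sup>+A. ennreal (tail_norm_sq D A k) \<partial>entries D)
      = (\<integral>\<^sup>+X. ennreal (real (D k) * site_var D k * feature_sq k)
          * ennreal (tail_norm_sq D X (Suc k)) \<partial>other_entries D k)"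
    by (subst nn_integral_split_site[OF k]) (simp_all add: inner)
  also have "\<dots> = ennreal (real (D k) * site_var D k * feature_sq k) *
    (\<integral>\<^sup>+A. ennreal (tail_norm_sq D A (Suc k)) \<partial>entries D)"
    by (subst nn_integral_cmult)
      (simp_all add: nn_integral_split_site[OF k] tail_norm_sq_Suc_merge_site[OF k]
        site.emeasure_space_1)
  finally show ?thesis .
qed

lemma integrable_tail_norm_sq:
  assumes "k \<le> n - 1"
  shows "integrable (entries D) (\<lambda>A. tail_norm_sq D A k)"
proof -
  interpret prob_space "entries D"
    by (rule prob_space_entries)
  have "(\<integral>\<^sup>+A. ennreal (tail_norm_sq D A (n - 1 - j)) \<partial>entries D) < \<infinity>" for j
  proof (induction j)
    case 0
    show ?case
      using tail_norm_sq_last[of D] by (simp add: emeasure_space_1)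
  next
    case (Suc j)
    show ?case
    proof (cases "n - 1 - Suc j = n - 1 - j")
      case True
      then show ?thesis using Suc.IH by simp
    next
      case False
      then have "Suc (n - 1 - Suc j) = n - 1 - j" "Suc (n - 1 - Suc j) < n"
        by auto
      then show ?thesis
        using Suc.IH nn_integral_tail_norm_sq_Suc[of "n - 1 - Suc j" D]
        by (simp add: ennreal_mult_less_top)
    qed
  qed
  note finite = this[of "n - 1 - k"]
  have "n - 1 - (n - 1 - k) = k"
    using assms by simp
  then show ?thesis
    using finite by (intro integrableI_nonneg) (auto simp: tail_norm_sq_nonneg)
qed

section \<open>The sequential limit\<close>

definition tail_idx :: "(nat \<Rightarrow> nat) \<Rightarrow> nat \<Rightarrow> (nat \<times> nat \<times> nat \<times> nat) set" where
  "tail_idx D k = {p \<in> idx D. Suc k \<le> fst p \<and> fst p < n - 1}"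

lemma tail_norm_sq_restrict_tail_idx:
  "Suc k < n \<Longrightarrow> tail_norm_sq D A (Suc k) = tail_norm_sq D (restrict A (tail_idx D k)) (Suc k)"
  by (intro tail_norm_sq_cong) (auto simp: tail_idx_def mps_index_def)

lemma tail_norm_sq_fun_upd:
  "Suc k < n \<Longrightarrow> tail_norm_sq (D(k := j)) A (Suc k) = tail_norm_sq D A (Suc k)"
proof -
  assume k: "Suc k < n"
  have "tail_prod (D(k := j)) A (Suc k) = tail_prod D A (Suc k)"
    unfolding tail_prod_def by (intro ext chain_prod_cong_dims) auto
  then show ?thesis
    using k by (simp add: tail_norm_sq_def frob_sq_def)
qed

lemma integral_tail_norm_sq_fun_upd:
  fixes g :: "real \<Rightarrow> real"
  assumes k: "Suc k < n" and g [measurable]: "g \<in> borel_measurable borel"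
  shows "(\<integral>A. g (tail_norm_sq (D(k := j)) A (Suc k)) \<partial>entries (D(k := j)))
    = (\<integral>A. g (tail_norm_sq D A (Suc k)) \<partial>entries D)"
proof -
  have restrict: "(\<integral>A. g (tail_norm_sq D' A (Suc k)) \<partial>entries D')
      = (\<integral>A. g (tail_norm_sq D' A (Suc k)) \<partial>PiM (tail_idx D' k)
          (\<lambda>p. gaussian 0 (site_var D' (fst p))))"
    for D'
  proof (rule integral_PiM_restrict[OF prob_space_site_law finite_idx])
    show "tail_idx D' k \<subseteq> idx D'"
      by (auto simp: tail_idx_def)
    show "(\<lambda>A. g (tail_norm_sq D' A (Suc k)))
        \<in> borel_measurable (PiM (tail_idx D' k) (\<lambda>p. gaussian 0 (site_var D' (fst p))))"
      by measurable
    show "g (tail_norm_sq D' A (Suc k))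
      = g (tail_norm_sq D' (restrict A (tail_idx D' k)) (Suc k))" for A
      by (simp flip: tail_norm_sq_restrict_tail_idx[OF k])
  qed
  have tail_idx_eq: "tail_idx (D(k := j)) k = tail_idx D k"
    by (auto simp: tail_idx_def mps_index_def)
  have PiM_eq: "PiM (tail_idx D k) (\<lambda>p. gaussian 0 (site_var (D(k := j)) (fst p)))
      = PiM (tail_idx D k) (\<lambda>p. gaussian 0 (site_var D (fst p)))"
    by (intro PiM_cong refl) (auto simp: tail_idx_def site_var_def mps_index_def)
  have "(\<integral>A. g (tail_norm_sq (D(k := j)) A (Suc k)) \<partial>entries (D(k := j)))
      = (\<integral>A. g (tail_norm_sq (D(k := j)) A (Suc k))
          \<partial>PiM (tail_idx D k) (\<lambda>p. gaussian 0 (site_var (D(k := j)) (fst p))))"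
    by (simp only: restrict tail_idx_eq)
  also have "\<dots> = (\<integral>A. g (tail_norm_sq D A (Suc k)) \<partial>PiM (tail_idx D k)
      (\<lambda>p. gaussian 0 (site_var D (fst p))))"
    by (simp only: PiM_eq tail_norm_sq_fun_upd[OF k])
  finally show ?thesis
    by (simp only: restrict)
qed

lemma abs_integral_exp_cond_var_diff_le:
  assumes k: "Suc k < n" and D: "\<forall>i<n. 1 \<le> D i"
  shows "\<bar>(\<integral>A. exp (- (t\<^sup>2 * cond_var D k A) / 2) \<partial>entries D)
      - (\<integral>A. exp (- (t\<^sup>2 * cond_var D (Suc k) A) / 2) \<partial>entries D)\<bar>
    \<le> t\<^sup>2 / 2 * (fluct_const D k / sqrt (real (D k)) * (\<integral>A. tail_norm_sq D A (Suc k) \<partial>entries D))"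
proof -
  interpret prob_space "entries D"
    by (rule prob_space_entries)
  let ?h = "\<lambda>j A. exp (- (t\<^sup>2 * cond_var D j A) / 2)"
  let ?c = "fluct_const D k / sqrt (real (D k))"
  have int_h: "integrable (entries D) (?h j)" for j
    by (intro integrable_const_bound[where B=1] AE_I2) (auto simp: cond_var_nonneg)
  have int_tail: "integrable (entries D) (\<lambda>A. tail_norm_sq D A (Suc k))"
    using k by (intro integrable_tail_norm_sq) simp
  have "ennreal \<bar>integral\<^sup>L (entries D) (?h k) - integral\<^sup>L (entries D) (?h (Suc k))\<bar>
      \<le> (\<integral>\<^sup>+A. ennreal (norm (?h k A - ?h (Suc k) A)) \<partial>entries D)"
    using integral_norm_bound_ennreal[of "entries D" "\<lambda>A. ?h k A - ?h (Suc k) A"] int_h by simp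
  also have "\<dots> \<le> (\<integral>\<^sup>+A. ennreal (t\<^sup>2 / 2) * ennreal \<bar>cond_var D k A - cond_var D (Suc k) A\<bar>
      \<partial>entries D)"
  proof (intro nn_integral_mono)
    fix A
    have "\<bar>?h k A - ?h (Suc k) A\<bar> \<le> \<bar>t\<^sup>2 * cond_var D k A / 2 - t\<^sup>2 * cond_var D (Suc k) A / 2\<bar>"
      using abs_exp_neg_diff_le[of "t\<^sup>2 * cond_var D k A / 2" "t\<^sup>2 * cond_var D (Suc k) A / 2"]
      by (simp add: cond_var_nonneg)
    also have "\<dots> = t\<^sup>2 / 2 * \<bar>cond_var D k A - cond_var D (Suc k) A\<bar>"
      by (simp add: abs_mult flip: right_diff_distrib diff_divide_distrib)
    finally show "ennreal (norm (?h k A - ?h (Suc k) A))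
        \<le> ennreal (t\<^sup>2 / 2) * ennreal \<bar>cond_var D k A - cond_var D (Suc k) A\<bar>"
      by (simp add: ennreal_mult[symmetric] ennreal_leI)
  qed
  also have "\<dots> = ennreal (t\<^sup>2 / 2) *
    (\<integral>\<^sup>+A. ennreal \<bar>cond_var D k A - cond_var D (Suc k) A\<bar> \<partial>entries D)"
    by (rule nn_integral_cmult) measurable
  also have "\<dots> \<le> ennreal (t\<^sup>2 / 2) * (\<integral>\<^sup>+A. ennreal (?c * tail_norm_sq D A (Suc k)) \<partial>entries D)"
    using nn_integral_abs_cond_var_diff_le[OF k D] by (intro mult_left_mono) simp_all
  also have "\<dots> = ennreal (t\<^sup>2 / 2 * (?c * (\<integral>A. tail_norm_sq D A (Suc k) \<partial>entries D)))"
    using int_tail fluct_const_nonneg[of D k]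
    by (simp add: nn_integral_eq_integral tail_norm_sq_nonneg integral_nonneg_AE
        ennreal_mult[symmetric])
  finally show ?thesis
    using fluct_const_nonneg[of D k]
    by (simp add: ennreal_le_iff integral_nonneg_AE tail_norm_sq_nonneg)
qed

lemma integral_exp_cond_var_tendsto:
  assumes k: "Suc k < n" and D: "\<forall>i<n. 1 \<le> D i"
  shows "(\<lambda>m. \<integral>A. exp (- (t\<^sup>2 * cond_var (D(k := Suc m)) k A) / 2) \<partial>entries (D(k := Suc m)))
    \<longlonglongrightarrow> (\<integral>A. exp (- (t\<^sup>2 * cond_var D (Suc k) A) / 2) \<partial>entries D)"
proof -
  define E where "E = (\<integral>A. tail_norm_sq D A (Suc k) \<partial>entries D)"
  let ?a = "\<lambda>m. \<integral>A. exp (- (t\<^sup>2 * cond_var (D(k := Suc m)) k A) / 2) \<partial>entries (D(k := Suc m))"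
  let ?b = "\<integral>A. exp (- (t\<^sup>2 * cond_var D (Suc k) A) / 2) \<partial>entries D"
  have other_sites: "k \<noteq> n - 1" "Suc k \<noteq> k"
    using k by auto
  have bound: "\<bar>?a m - ?b\<bar> \<le> t\<^sup>2 / 2 * (fluct_const D k / sqrt (real (Suc m)) * E)" for m
  proof -
    have D': "\<forall>i<n. 1 \<le> (D(k := Suc m)) i"
      using D by simp
    have "var_scale (D(k := Suc m)) (Suc k) = var_scale D (Suc k)"
      using other_sites by (simp add: var_scale_def)
    then have b: "(\<integral>A. exp (- (t\<^sup>2 * cond_var (D(k := Suc m)) (Suc k) A) / 2)
        \<partial>entries (D(k := Suc m))) = ?b"
      unfolding cond_var_def
      using integral_tail_norm_sq_fun_upd[OF k,
          where g="\<lambda>r. exp (- (t\<^sup>2 * (var_scale D (Suc k) * r)) / 2)"]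
      by simp
    have E: "(\<integral>A. tail_norm_sq (D(k := Suc m)) A (Suc k) \<partial>entries (D(k := Suc m))) = E"
      unfolding E_def using integral_tail_norm_sq_fun_upd[OF k, where g="\<lambda>r. r"] by simp
    have fluct: "fluct_const (D(k := Suc m)) k = fluct_const D k"
      using other_sites by (simp add: fluct_const_def)
    from abs_integral_exp_cond_var_diff_le[OF k D', of t]
    show ?thesis
      unfolding b E fluct fun_upd_same .
  qed
  have lim: "(\<lambda>m. t\<^sup>2 / 2 * (fluct_const D k / sqrt (real (Suc m)) * E)) \<longlonglongrightarrow> 0"
  proof -
    have "(\<lambda>m. inverse (sqrt (real (Suc m)))) \<longlonglongrightarrow> 0"
      using tendsto_real_sqrt[OF LIMSEQ_inverse_real_of_nat] by (simp add: real_sqrt_inverse)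
    from tendsto_mult_right_zero[OF this, of "t\<^sup>2 / 2 * fluct_const D k * E"] show ?thesis
      by (simp add: inverse_eq_divide mult.assoc)
  qed
  have "(\<lambda>m. ?a m - ?b) \<longlonglongrightarrow> 0"
    by (rule Lim_null_comparison[OF always_eventually lim])
      (simp only: real_norm_def bound simp_thms)
  then show ?thesis
    by (rule LIM_zero_cancel)
qed

definition limit_law :: "nat \<Rightarrow> (nat \<Rightarrow> nat) \<Rightarrow> real measure" where
  "limit_law k D = (if k = 0 then mps_law n d \<phi> \<sigma> x D
     else if k < n then mixture D k else gaussian 0 (weight_prod (n - 1)))"

lemma real_distribution_limit_law: "real_distribution (limit_law k D)"
  by (simp add: limit_law_def real_distribution_mps_law real_distribution_mixture
      real_distribution_gaussian weight_prod_nonneg)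

lemma char_limit_law:
  "k < n \<Longrightarrow> char (limit_law k D) t
    = complex_of_real (\<integral>A. exp (- (t\<^sup>2 * cond_var D k A) / 2) \<partial>entries D)"
  by (simp add: limit_law_def char_mps_law char_mixture)

lemma weak_conv_limit_law:
  assumes k: "k < n" and D: "\<forall>i<n. 1 \<le> D i"
  shows "weak_conv_m (\<lambda>m. limit_law k (D(k := Suc m))) (limit_law (Suc k) D)"
proof (rule levy_continuity[OF real_distribution_limit_law real_distribution_limit_law])
  fix t
  show "(\<lambda>m. char (limit_law k (D(k := Suc m))) t) \<longlonglongrightarrow> char (limit_law (Suc k) D) t"
  proof (cases "Suc k < n")
    case True
    show ?thesis
      unfolding char_limit_law[OF k] char_limit_law[OF True]
      by (rule tendsto_of_real[OF integral_exp_cond_var_tendsto[OF True D]])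
  next
    case False
    then have last: "k = n - 1" "Suc k = n"
      using k by auto
    have "cond_var (D(k := Suc m)) k A = weight_prod k" for m A
      using cond_var_last[of "D(k := Suc m)" A] by (simp add: last(1))
    then have "char (limit_law k (D(k := Suc m))) t = exp (- (t\<^sup>2 * weight_prod k) / 2)" for m
      by (simp add: char_limit_law[OF k] prob_space.prob_space[OF prob_space_entries])
    moreover have "char (limit_law (Suc k) D) t = exp (- (t\<^sup>2 * weight_prod k) / 2)"
      using last by (simp add: limit_law_def char_gaussian weight_prod_nonneg)
    ultimately show ?thesis
      by simp
  qed
qed

theorem seq_weak_limit_mps_law:
  "seq_weak_limit n (mps_law n d \<phi> \<sigma> x) (gaussian 0 (\<Prod>i<n. (\<Sum>j<d i. (\<phi> i (x i) j)\<^sup>2) * (\<sigma> i)\<^sup>2))"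
proof -
  have "limit_law 0 D = mps_law n d \<phi> \<sigma> x D"
    and "limit_law n D = gaussian 0 (weight_prod (n - 1))" for D
    using n_pos by (simp_all add: limit_law_def)
  then show ?thesis
    unfolding seq_weak_limit_def weight_prod_last[symmetric]
    by (intro exI[of _ limit_law]) (simp add: real_distribution_limit_law weak_conv_limit_law)
qed

end

theorem proposition2:
  fixes n :: nat and d :: "nat \<Rightarrow> nat" and \<phi> :: "nat \<Rightarrow> real \<Rightarrow> nat \<Rightarrow> real"
    and \<sigma> :: "nat \<Rightarrow> real" and x :: "nat \<Rightarrow> real"
  assumes "1 \<le> n"
    and "\<forall>i<n. 1 \<le> d i"
    and "\<forall>i<n. 0 < \<sigma> i"
  shows "seq_weak_limit n (mps_law n d \<phi> \<sigma> x)
           (gaussian 0 (\<Prod>i<n. (\<Sum>j<d i. (\<phi> i (x i) j)\<^sup>2) * (\<sigma> i)\<^sup>2))"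
proof -
  \<comment> \<open>Only \<open>\<sigma>\<^sup>2\<close> enters the model.\<close>
  interpret mps_model n d \<phi> \<sigma> x
    using assms(1,2) by unfold_locales
  show ?thesis
    by (rule seq_weak_limit_mps_law)
qed

end
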